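(* Consider any sequence of positive numbers $\{\xi_n\}_{n=1}^{\infty}$ such that $\xi_n\to 0$ and $\sqrt{n}\xi_n\to\infty$ as $n\to\infty$. When the rate $R^\mathrm{i}$ approaches capacity $C_{\rm{bio}}$ from above, the probability of correct decoding scales as \begin{align} \lim_{n\to\infty} -\frac{\log \mathrm{P}_\mathrm{c}^*(n,C_{\rm{bio}}+\xi_n)}{n\xi_n^2}=\frac{1}{2\mathrm{V}}. \end{align} Similarly, when the rate $R^\mathrm{i}$ approaches capacity $C_{\rm{bio}}$ from below, the probability of correct decoding scales as \begin{align} \lim_{n\to\infty} -\frac{\log (1-\mathrm{P}_\mathrm{c}^*(n,C_{\rm{bio}}-\xi_n))}{n\xi_n^2}=\frac{1}{2\mathrm{V}}. \end{align}
   Context: Biometrical identification problem: $\mathcal{X},\mathcal{Y},\mathcal{Z}$ are finite alphabets; $M$ feature vectors $X^n(1),\ldots,X^n(M)$ are generated i.i.d. according to $P_X^n$; for each $m$, $Y^n(m)$ is the output of a DMC $P_{Y|X}$ with input $X^n(m)$ and is stored without compression. An index $W$ uniform on $\{1,\ldots,M\}$, independent of everything else, is drawn; the user observes $Z^n$, the output of a DMC $P_{Z|X}$ with input $X^n(W)$, and outputs $\hat{W}=g^{(n)}(Y^n(1),\ldots,Y^n(M),Z^n)$ for a deterministic decoding function $g^{(n)}$. The probability of correct decoding is $\mathrm{P}_\mathrm{c}^{(n)}(g^{(n)})=\Pr\{\hat{W}=W\}$. Let $\mathrm{P}_\mathrm{c}^*(n,R^\mathrm{i})$ be the maximum probability of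 correct decoding (over decoders) when the number of items $M$ satisfies $\log M\ge nR^\mathrm{i}$. Let $(Y,Z)\sim P_{YZ}$ induced by $P_X\times P_{Y|X}\times P_{Z|X}$; the capacity is $C_{\mathrm{bio}}=I(P_Y,P_{Z|Y})$, and $\mathrm{V}:=\mathrm{Var}\left[\log\frac{P_{Z|Y}(Z|Y)}{P_Z(Z)}\right]$ is assumed to satisfy $\mathrm{V}>0$. *)

theory Defs
  imports Complex_Main "HOL-Library.FuncSet"
begin

text \<open>Length-n sequences are
  extensional functions on {..<n}; a list of M sequences is an extensional
  function on {..<M} (items are indexed 0,...,M-1). Logarithms are natural.\<close>

definition pmf_on :: "('a::finite \<Rightarrow> real) \<Rightarrow> bool" where
  "pmf_on P \<longleftrightarrow> (\<forall>a. 0 \<le> P a) \<and> (\<Sum>a\<in>UNIV. P a) = 1"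

definition stoch_chan :: "('a::finite \<Rightarrow> 'b::finite \<Rightarrow> real) \<Rightarrow> bool" where
  "stoch_chan W \<longleftrightarrow> (\<forall>a. pmf_on (W a))"

definition seqs :: "nat \<Rightarrow> (nat \<Rightarrow> 'a) set" where
  "seqs n = {..<n} \<rightarrow>\<^sub>E UNIV"

definition tuples :: "nat \<Rightarrow> nat \<Rightarrow> (nat \<Rightarrow> nat \<Rightarrow> 'a) set" where
  "tuples M n = {..<M} \<rightarrow>\<^sub>E seqs n"

definition iid :: "nat \<Rightarrow> ('a \<Rightarrow> real) \<Rightarrow> (nat \<Rightarrow> 'a) \<Rightarrow> real" where
  "iid n P x = (\<Prod>i<n. P (x i))"

definition dmc :: "nat \<Rightarrow> ('a \<Rightarrow> 'b \<Rightarrow> real) \<Rightarrow> (nat \<Rightarrow> 'a) \<Rightarrow> (nat \<Rightarrow> 'b) \<Rightarrow> real" where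
  "dmc n W x y = (\<Prod>i<n. W (x i) (y i))"

text \<open>Probability of correct decoding of decoder g with M stored items.
  W uniform on {..<M}; X(m) iid P_X^n; Y(m) output of P_{Y|X}^n on X(m);
  Z output of P_{Z|X}^n on X(W); decision g(Y(0..M-1), Z).\<close>
definition prob_correct ::
  "('x::finite \<Rightarrow> real) \<Rightarrow> ('x \<Rightarrow> 'y::finite \<Rightarrow> real) \<Rightarrow> ('x \<Rightarrow> 'z::finite \<Rightarrow> real)
   \<Rightarrow> nat \<Rightarrow> nat \<Rightarrow> ((nat \<Rightarrow> nat \<Rightarrow> 'y) \<Rightarrow> (nat \<Rightarrow> 'z) \<Rightarrow> nat) \<Rightarrow> real" where
  "prob_correct PX WY WZ n M g =
     (\<Sum>w<M. (1 / real M) *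
        (\<Sum>xs\<in>tuples M n. \<Sum>ys\<in>tuples M n. \<Sum>z\<in>seqs n.
           (\<Prod>m<M. iid n PX (xs m) * dmc n WY (xs m) (ys m))
           * dmc n WZ (xs w) z * (if g ys z = w then 1 else 0)))"

definition pc_star ::
  "('x::finite \<Rightarrow> real) \<Rightarrow> ('x \<Rightarrow> 'y::finite \<Rightarrow> real) \<Rightarrow> ('x \<Rightarrow> 'z::finite \<Rightarrow> real)
   \<Rightarrow> nat \<Rightarrow> real \<Rightarrow> real" where
  "pc_star PX WY WZ n R =
     Sup {prob_correct PX WY WZ n M g | M g. 1 \<le> M \<and> ln (real M) \<ge> real n * R}"

definition PYZ :: "('x::finite \<Rightarrow> real) \<Rightarrow> ('x \<Rightarrow> 'y \<Rightarrow> real) \<Rightarrow> ('x \<Rightarrow> 'z \<Rightarrow> real) \<Rightarrow> 'y \<Rightarrow> 'z \<Rightarrow> real" where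
  "PYZ PX WY WZ y z = (\<Sum>x\<in>UNIV. PX x * WY x y * WZ x z)"

definition PY :: "('x::finite \<Rightarrow> real) \<Rightarrow> ('x \<Rightarrow> 'y \<Rightarrow> real) \<Rightarrow> ('x \<Rightarrow> 'z::finite \<Rightarrow> real) \<Rightarrow> 'y \<Rightarrow> real" where
  "PY PX WY WZ y = (\<Sum>z\<in>UNIV. PYZ PX WY WZ y z)"

definition PZ :: "('x::finite \<Rightarrow> real) \<Rightarrow> ('x \<Rightarrow> 'y::finite \<Rightarrow> real) \<Rightarrow> ('x \<Rightarrow> 'z \<Rightarrow> real) \<Rightarrow> 'z \<Rightarrow> real" where
  "PZ PX WY WZ z = (\<Sum>y\<in>UNIV. PYZ PX WY WZ y z)"

definition info_dens :: "('x::finite \<Rightarrow> real) \<Rightarrow> ('x \<Rightarrow> 'y::finite \<Rightarrow> real) \<Rightarrow> ('x \<Rightarrow> 'z::finite \<Rightarrow> real) \<Rightarrow> 'y \<Rightarrow> 'z \<Rightarrow> real" where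
  "info_dens PX WY WZ y z =
     ln (PYZ PX WY WZ y z / (PY PX WY WZ y * PZ PX WY WZ z))"

text \<open>C_bio = I(P_Y, P_{Z|Y}) = E[info density] (expectation over the support)\<close>
definition C_bio :: "('x::finite \<Rightarrow> real) \<Rightarrow> ('x \<Rightarrow> 'y::finite \<Rightarrow> real) \<Rightarrow> ('x \<Rightarrow> 'z::finite \<Rightarrow> real) \<Rightarrow> real" where
  "C_bio PX WY WZ = (\<Sum>(y,z)\<in>{(y,z). PYZ PX WY WZ y z > 0}.
      PYZ PX WY WZ y z * info_dens PX WY WZ y z)"

definition V_bio :: "('x::finite \<Rightarrow> real) \<Rightarrow> ('x \<Rightarrow> 'y::finite \<Rightarrow> real) \<Rightarrow> ('x \<Rightarrow> 'z::finite \<Rightarrow> real) \<Rightarrow> real" where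
  "V_bio PX WY WZ = (\<Sum>(y,z)\<in>{(y,z). PYZ PX WY WZ y z > 0}.
      PYZ PX WY WZ y z * (info_dens PX WY WZ y z - C_bio PX WY WZ) ^ 2)"

end

theory Submission
  imports Defs
begin

text \<open>Both a converse and an achievability bound reduce the optimal probability of correct
  decoding to a tail probability of the sum S of n i.i.d. copies of the information density
  i(Y,Z), (Y,Z) ~ P_YZ: the hypothesis testing bound gives P_c <= e^t/M + P(S > t) and a
  threshold decoder gives P_c >= P(S > t) - M e^-t. For thresholds t = nR -+ n xi^2/V both
  become moderate deviation probabilities P(S - nC > n xi (1 + o(1))), resp. of -S, for a
  bounded centred i.i.d. sum. Their exponent n xi^2/(2V) comes from the Chernoff bound (from
  above) and from exponential tilting together with Chebyshev's inequality under the tilted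
  law (from below); the correction e^(-n xi^2/V) is of smaller order.\<close>

section \<open>Taylor bounds for the exponential\<close>

lemma abs_exp_minus_one_minus_le:
  fixes x :: real
  shows "\<bar>exp x - 1 - x\<bar> \<le> x\<^sup>2 * exp \<bar>x\<bar> / 2"
proof -
  obtain t where t: "\<bar>t\<bar> \<le> \<bar>x\<bar>" "exp x = (\<Sum>m<2. x ^ m / fact m) + exp t / fact 2 * x ^ 2"
    using Maclaurin_exp_le[of x 2] by blast
  have "\<bar>exp x - 1 - x\<bar> = exp t * x\<^sup>2 / 2"
    using t(2) by (simp add: numeral_2_eq_2)
  also have "\<dots> \<le> exp \<bar>x\<bar> * x\<^sup>2 / 2"
    using t(1) by (intro divide_right_mono mult_right_mono) auto
  finally show ?thesis
    by (simp add: mult.commute)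
qed

lemma exp_le_cubic_Taylor:
  fixes x :: real
  shows "exp x \<le> 1 + x + x\<^sup>2 / 2 + \<bar>x\<bar> ^ 3 * exp \<bar>x\<bar> / 6"
proof -
  obtain t where t: "\<bar>t\<bar> \<le> \<bar>x\<bar>" "exp x = (\<Sum>m<3. x ^ m / fact m) + exp t / fact 3 * x ^ 3"
    using Maclaurin_exp_le[of x 3] by blast
  have "exp x = 1 + x + x\<^sup>2 / 2 + exp t * x ^ 3 / 6"
    using t(2) by (simp add: eval_nat_numeral fact_numeral)
  moreover have "exp t * x ^ 3 \<le> exp \<bar>x\<bar> * \<bar>x\<bar> ^ 3"
  proof -
    have "exp t * x ^ 3 \<le> exp t * \<bar>x\<bar> ^ 3"
      by (intro mult_left_mono) (auto simp: power_abs[symmetric])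
    also have "\<dots> \<le> exp \<bar>x\<bar> * \<bar>x\<bar> ^ 3"
      using t(1) by (intro mult_right_mono) auto
    finally show ?thesis .
  qed
  ultimately show ?thesis
    by (simp add: mult.commute)
qed

lemma cubic_Taylor_le_exp:
  fixes x :: real
  shows "1 + x + x\<^sup>2 / 2 + x ^ 3 / 6 \<le> exp x"
proof -
  obtain t where t: "exp x = (\<Sum>m<4. x ^ m / fact m) + exp t / fact 4 * x ^ 4"
    using Maclaurin_exp_le[of x 4] by blast
  have "exp x = 1 + x + x\<^sup>2 / 2 + x ^ 3 / 6 + exp t * x ^ 4 / 24"
    using t by (simp add: eval_nat_numeral fact_numeral)
  moreover have "0 \<le> exp t * x ^ 4"
    by (simp add: zero_le_even_power)
  ultimately show ?thesis
    by simp
qed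

section \<open>Sums of i.i.d. random variables\<close>

lemma finite_seqs [simp]: "finite (seqs n :: (nat \<Rightarrow> 'a::finite) set)"
  unfolding seqs_def by (intro finite_PiE) auto

lemma sum_seqs_prod:
  fixes F :: "nat \<Rightarrow> 'a::finite \<Rightarrow> real"
  shows "(\<Sum>x\<in>seqs n. \<Prod>i<n. F i (x i)) = (\<Prod>i<n. \<Sum>a\<in>UNIV. F i a)"
  unfolding seqs_def by (subst prod_sum_PiE) auto

lemma pmf_on_nonneg: "pmf_on q \<Longrightarrow> 0 \<le> q a"
  by (simp add: pmf_on_def)

lemma pmf_on_sum: "pmf_on q \<Longrightarrow> (\<Sum>a\<in>UNIV. q a) = 1"
  by (simp add: pmf_on_def)

lemma iid_nonneg: "pmf_on q \<Longrightarrow> 0 \<le> iid n q x"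
  unfolding iid_def by (intro prod_nonneg) (auto simp: pmf_on_def)

lemma sum_iid: "pmf_on q \<Longrightarrow> (\<Sum>x\<in>seqs n. iid n q x) = 1"
  unfolding iid_def by (subst sum_seqs_prod) (simp add: pmf_on_def)

definition prob_sum :: "('a::finite \<Rightarrow> real) \<Rightarrow> ('a \<Rightarrow> real) \<Rightarrow> nat \<Rightarrow> (real \<Rightarrow> bool) \<Rightarrow> real" where
  "prob_sum q g n P = (\<Sum>x\<in>seqs n. iid n q x * of_bool (P (\<Sum>i<n. g (x i))))"

lemma prob_sum_nonneg: "pmf_on q \<Longrightarrow> 0 \<le> prob_sum q g n P"
  unfolding prob_sum_def by (intro sum_nonneg) (simp add: iid_nonneg)

lemma prob_sum_not:
  assumes "pmf_on q"
  shows "prob_sum q g n (\<lambda>s. \<not> P s) = 1 - prob_sum q g n P"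
proof -
  have "prob_sum q g n (\<lambda>s. \<not> P s) + prob_sum q g n P = (\<Sum>x\<in>seqs n. iid n q x)"
    unfolding prob_sum_def sum.distrib[symmetric] by (intro sum.cong) auto
  then show ?thesis
    using sum_iid[OF assms] by simp
qed

lemma prob_sum_le_1: "pmf_on q \<Longrightarrow> prob_sum q g n P \<le> 1"
  using prob_sum_not[of q g n "\<lambda>s. \<not> P s"] prob_sum_nonneg[of q g n] by auto

lemma prob_sum_mono:
  "pmf_on q \<Longrightarrow> (\<And>s. P s \<Longrightarrow> P' s) \<Longrightarrow> prob_sum q g n P \<le> prob_sum q g n P'"
  unfolding prob_sum_def by (intro sum_mono mult_left_mono) (auto simp: iid_nonneg)

lemma prob_sum_greater_conv_uminus:
  assumes "pmf_on q"
  shows "prob_sum q g n (\<lambda>s. b < s) = 1 - prob_sum q (\<lambda>a. - g a) n (\<lambda>s. - b \<le> s)"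
proof -
  have "prob_sum q (\<lambda>a. - g a) n (\<lambda>s. - b \<le> s) = prob_sum q g n (\<lambda>s. \<not> b < s)"
    unfolding prob_sum_def by (simp add: sum_negf not_less)
  then show ?thesis
    using prob_sum_not[OF assms, of g n "\<lambda>s. b < s"] by simp
qed

definition mgf :: "('a::finite \<Rightarrow> real) \<Rightarrow> ('a \<Rightarrow> real) \<Rightarrow> real \<Rightarrow> real" where
  "mgf q g l = (\<Sum>a\<in>UNIV. q a * exp (l * g a))"

definition tilted :: "('a::finite \<Rightarrow> real) \<Rightarrow> ('a \<Rightarrow> real) \<Rightarrow> real \<Rightarrow> 'a \<Rightarrow> real" where
  "tilted q g l a = q a * exp (l * g a) / mgf q g l"

lemma iid_mult_exp_sum:
  "iid n q x * exp (l * (\<Sum>i<n. g (x i))) = (\<Prod>i<n. q (x i) * exp (l * g (x i)))"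
  unfolding iid_def by (simp add: sum_distrib_left exp_sum prod.distrib)

lemma sum_iid_exp_sum:
  fixes q :: "'a::finite \<Rightarrow> real"
  shows "(\<Sum>x\<in>seqs n. iid n q x * exp (l * (\<Sum>i<n. g (x i)))) = mgf q g l ^ n"
  unfolding iid_mult_exp_sum mgf_def using sum_seqs_prod[of "\<lambda>i a. q a * exp (l * g a)" n] by simp

lemma mgf_pos:
  assumes q: "pmf_on q"
  shows "0 < mgf q g l"
proof -
  obtain a where "0 < q a"
    using pmf_on_sum[OF q] pmf_on_nonneg[OF q] by (metis less_eq_real_def sum.neutral zero_neq_one)
  then have "0 < q a * exp (l * g a)"
    by simp
  also have "\<dots> \<le> mgf q g l"
    unfolding mgf_def by (rule member_le_sum) (auto simp: pmf_on_nonneg[OF q])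
  finally show ?thesis .
qed

lemma pmf_on_tilted: "pmf_on q \<Longrightarrow> pmf_on (tilted q g l)"
  using mgf_pos[of q g l]
  by (auto simp: pmf_on_def tilted_def mgf_def sum_divide_distrib[symmetric])

lemma iid_tilted:
  "iid n (tilted q g l) x = iid n q x * exp (l * (\<Sum>i<n. g (x i))) / mgf q g l ^ n"
  unfolding iid_mult_exp_sum unfolding iid_def tilted_def by (simp add: prod_dividef)

lemma prob_sum_Chernoff:
  assumes q: "pmf_on q" and l: "0 \<le> l"
  shows "prob_sum q g n (\<lambda>s. t \<le> s) \<le> exp (- l * t) * mgf q g l ^ n"
proof -
  have "prob_sum q g n (\<lambda>s. t \<le> s)
      \<le> (\<Sum>x\<in>seqs n. iid n q x * (exp (- l * t) * exp (l * (\<Sum>i<n. g (x i)))))"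
    unfolding prob_sum_def
  proof (intro sum_mono mult_left_mono)
    fix x :: "nat \<Rightarrow> 'a"
    let ?s = "\<Sum>i<n. g (x i)"
    have "t \<le> ?s \<Longrightarrow> 1 \<le> exp (l * (?s - t))"
      using l by simp
    then show "of_bool (t \<le> ?s) \<le> exp (- l * t) * exp (l * ?s)"
      by (auto simp: exp_add[symmetric] algebra_simps)
  qed (simp add: iid_nonneg q)
  also have "\<dots> = exp (- l * t) * mgf q g l ^ n"
    by (simp add: sum_distrib_left sum_iid_exp_sum[symmetric] algebra_simps)
  finally show ?thesis .
qed

text \<open>The change of measure behind the lower bound: on the event \<open>S \<le> b\<close> the likelihood
  ratio of the tilted law is at most \<open>e\<^sup>l\<^sup>b / mgf\<^sup>n\<close>.\<close>

lemma prob_sum_greater_ge_tilted: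
  assumes q: "pmf_on q" and l: "0 \<le> l"
  shows "exp (- l * b) * mgf q g l ^ n * prob_sum (tilted q g l) g n (\<lambda>s. a < s \<and> s \<le> b)
    \<le> prob_sum q g n (\<lambda>s. a < s)"
proof -
  have M: "mgf q g l \<noteq> 0"
    using mgf_pos[OF q] by (metis less_irrefl)
  have "exp (- l * b) * mgf q g l ^ n * prob_sum (tilted q g l) g n (\<lambda>s. a < s \<and> s \<le> b)
      = (\<Sum>x\<in>seqs n. iid n q x * (exp (l * ((\<Sum>i<n. g (x i)) - b))
           * of_bool (a < (\<Sum>i<n. g (x i)) \<and> (\<Sum>i<n. g (x i)) \<le> b)))"
    using M unfolding prob_sum_def iid_tilted
    by (simp add: sum_distrib_left exp_diff exp_minus field_simps)
  also have "\<dots> \<le> prob_sum q g n (\<lambda>s. a < s)"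
    unfolding prob_sum_def
  proof (intro sum_mono mult_left_mono)
    fix x :: "nat \<Rightarrow> 'a"
    let ?s = "\<Sum>i<n. g (x i)"
    have "?s \<le> b \<Longrightarrow> exp (l * (?s - b)) \<le> 1"
      using l by (simp add: mult_nonneg_nonpos)
    then show "exp (l * (?s - b)) * of_bool (a < ?s \<and> ?s \<le> b) \<le> of_bool (a < ?s)"
      by auto
  qed (simp add: iid_nonneg q)
  finally show ?thesis .
qed

lemma sum_iid_mult_components:
  assumes p: "pmf_on p" and ij: "i < n" "j < n"
  shows "(\<Sum>x\<in>seqs n. iid n p x * (h (x i) * h (x j)))
    = (if i = j then (\<Sum>a\<in>UNIV. p a * (h a)\<^sup>2) else (\<Sum>a\<in>UNIV. p a * h a)\<^sup>2)"
proof -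
  let ?E1 = "\<Sum>a\<in>UNIV. p a * h a" and ?E2 = "\<Sum>a\<in>UNIV. p a * (h a)\<^sup>2"
  let ?F = "\<lambda>k a. p a * (if k = i then h a else 1) * (if k = j then h a else 1)"
  have "(\<Sum>x\<in>seqs n. iid n p x * (h (x i) * h (x j))) = (\<Sum>x\<in>seqs n. \<Prod>k<n. ?F k (x k))"
    using ij by (simp add: iid_def prod.distrib mult.assoc)
  also have "\<dots> = (\<Prod>k<n. \<Sum>a\<in>UNIV. ?F k a)"
    by (rule sum_seqs_prod)
  finally have sum_eq: "(\<Sum>x\<in>seqs n. iid n p x * (h (x i) * h (x j))) = (\<Prod>k<n. \<Sum>a\<in>UNIV. ?F k a)" .
  show ?thesis
  proof (cases "i = j")
    case True
    have "(\<Prod>k<n. \<Sum>a\<in>UNIV. ?F k a) = (\<Prod>k<n. if k = i then ?E2 else 1)"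
      using True p by (intro prod.cong) (auto simp: pmf_on_def power2_eq_square mult.assoc)
    then show ?thesis
      using True ij sum_eq by simp
  next
    case False
    have "(\<Prod>k<n. \<Sum>a\<in>UNIV. ?F k a) = (\<Prod>k<n. (if k = i then ?E1 else 1) * (if k = j then ?E1 else 1))"
      using False p by (intro prod.cong) (auto simp: pmf_on_def)
    then show ?thesis
      using False ij sum_eq by (simp add: prod.distrib power2_eq_square)
  qed
qed

lemma sum_iid_square_sum:
  assumes p: "pmf_on p"
  shows "(\<Sum>x\<in>seqs n. iid n p x * (\<Sum>i<n. h (x i))\<^sup>2)
     = real n * (\<Sum>a\<in>UNIV. p a * (h a)\<^sup>2) + (real n * real n - real n) * (\<Sum>a\<in>UNIV. p a * h a)\<^sup>2"
proof -
  let ?E1 = "\<Sum>a\<in>UNIV. p a * h a" and ?E2 = "\<Sum>a\<in>UNIV. p a * (h a)\<^sup>2"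
  have "(\<Sum>x\<in>seqs n. iid n p x * (\<Sum>i<n. h (x i))\<^sup>2)
      = (\<Sum>x\<in>seqs n. \<Sum>i<n. \<Sum>j<n. iid n p x * (h (x i) * h (x j)))"
  proof (intro sum.cong refl)
    fix x :: "nat \<Rightarrow> 'a"
    have "(\<Sum>i<n. h (x i))\<^sup>2 = (\<Sum>i<n. \<Sum>j<n. h (x i) * h (x j))"
      unfolding power2_eq_square by (rule sum_product)
    then show "iid n p x * (\<Sum>i<n. h (x i))\<^sup>2 = (\<Sum>i<n. \<Sum>j<n. iid n p x * (h (x i) * h (x j)))"
      by (simp add: sum_distrib_left)
  qed
  also have "\<dots> = (\<Sum>i<n. \<Sum>j<n. \<Sum>x\<in>seqs n. iid n p x * (h (x i) * h (x j)))"
    by (simp add: sum.swap[of _ "seqs n"])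
  also have "\<dots> = (\<Sum>i<n. \<Sum>j<n. (if i = j then ?E2 - ?E1\<^sup>2 else 0) + ?E1\<^sup>2)"
    by (intro sum.cong refl) (simp add: sum_iid_mult_components[OF p])
  also have "\<dots> = real n * ?E2 + (real n * real n - real n) * ?E1\<^sup>2"
    by (simp add: sum.distrib algebra_simps)
  finally show ?thesis .
qed

lemma prob_sum_Chebyshev:
  assumes p: "pmf_on p" and d: "0 < d"
  shows "prob_sum p g n (\<lambda>s. d \<le> \<bar>s - real n * c\<bar>)
     \<le> (real n * (\<Sum>a\<in>UNIV. p a * (g a - c)\<^sup>2) + real n * real n * (\<Sum>a\<in>UNIV. p a * (g a - c))\<^sup>2) / d\<^sup>2"
proof -
  have "prob_sum p g n (\<lambda>s. d \<le> \<bar>s - real n * c\<bar>)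
      \<le> (\<Sum>x\<in>seqs n. iid n p x * ((\<Sum>i<n. g (x i) - c)\<^sup>2 / d\<^sup>2))"
    unfolding prob_sum_def
  proof (intro sum_mono mult_left_mono)
    fix x :: "nat \<Rightarrow> 'a"
    have "(\<Sum>i<n. g (x i) - c) = (\<Sum>i<n. g (x i)) - real n * c"
      by (simp add: sum_subtractf)
    moreover have "d \<le> \<bar>t\<bar> \<Longrightarrow> d\<^sup>2 \<le> t\<^sup>2" for t
      using d by (metis abs_le_square_iff abs_of_pos)
    ultimately show "of_bool (d \<le> \<bar>(\<Sum>i<n. g (x i)) - real n * c\<bar>) \<le> (\<Sum>i<n. g (x i) - c)\<^sup>2 / d\<^sup>2"
      using d by auto
  qed (simp add: iid_nonneg p)
  also have "\<dots> = (real n * (\<Sum>a\<in>UNIV. p a * (g a - c)\<^sup>2)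
      + (real n * real n - real n) * (\<Sum>a\<in>UNIV. p a * (g a - c))\<^sup>2) / d\<^sup>2"
    by (subst sum_iid_square_sum[OF p, symmetric]) (simp add: sum_divide_distrib)
  also have "\<dots> \<le> (real n * (\<Sum>a\<in>UNIV. p a * (g a - c)\<^sup>2)
      + real n * real n * (\<Sum>a\<in>UNIV. p a * (g a - c))\<^sup>2) / d\<^sup>2"
    by (intro divide_right_mono add_left_mono mult_right_mono) auto
  finally show ?thesis .
qed


section \<open>Moderate deviations of bounded centred sums\<close>

locale bounded_centered =
  fixes q :: "'a::finite \<Rightarrow> real" and g :: "'a \<Rightarrow> real" and V B :: real
  assumes q: "pmf_on q" and mean: "(\<Sum>a\<in>UNIV. q a * g a) = 0"
    and Vdef: "V = (\<Sum>a\<in>UNIV. q a * (g a)\<^sup>2)" and Vpos: "0 < V"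
    and gB: "\<And>a. \<bar>g a\<bar> \<le> B"
begin

lemma B_nonneg: "0 \<le> B"
  using gB[of undefined] by linarith

lemma q_nonneg: "0 \<le> q a"
  by (rule pmf_on_nonneg[OF q])

lemma sum_q: "(\<Sum>a\<in>UNIV. q a) = 1"
  by (rule pmf_on_sum[OF q])

lemma abs_mult_le: "0 \<le> l \<Longrightarrow> \<bar>l * g a\<bar> \<le> l * B"
  using gB[of a] by (simp add: abs_mult mult_left_mono)

lemma square_mult_le: "0 \<le> l \<Longrightarrow> (l * g a)\<^sup>2 \<le> (l * B)\<^sup>2"
  using abs_mult_le[of l a] B_nonneg by (metis abs_le_square_iff abs_of_nonneg zero_le_mult_iff)

lemma expectation_quadratic: "(\<Sum>a\<in>UNIV. q a * (\<alpha> + \<beta> * g a + \<gamma> * (g a)\<^sup>2)) = \<alpha> + \<gamma> * V"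
proof -
  have "(\<Sum>a\<in>UNIV. q a * (\<alpha> + \<beta> * g a + \<gamma> * (g a)\<^sup>2))
      = \<alpha> * (\<Sum>a\<in>UNIV. q a) + \<beta> * (\<Sum>a\<in>UNIV. q a * g a) + \<gamma> * (\<Sum>a\<in>UNIV. q a * (g a)\<^sup>2)"
    by (simp add: sum.distrib sum_distrib_left algebra_simps)
  then show ?thesis
    using sum_q mean Vdef by simp
qed

lemma mgf_ge_1: "1 \<le> mgf q g l"
proof -
  have "(\<Sum>a\<in>UNIV. q a * (1 + l * g a + 0 * (g a)\<^sup>2)) \<le> mgf q g l"
    unfolding mgf_def by (intro sum_mono mult_left_mono) (auto simp: q_nonneg)
  then show ?thesis
    by (simp only: expectation_quadratic)
qed

lemma mgf_le_cubic:
  assumes l: "0 \<le> l"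
  shows "mgf q g l \<le> 1 + l\<^sup>2 * V / 2 + l ^ 3 * B ^ 3 * exp (l * B) / 6"
proof -
  have "mgf q g l \<le> (\<Sum>a\<in>UNIV. q a * ((1 + l ^ 3 * B ^ 3 * exp (l * B) / 6) + l * g a + l\<^sup>2 / 2 * (g a)\<^sup>2))"
    unfolding mgf_def
  proof (intro sum_mono mult_left_mono q_nonneg)
    fix a
    have "exp (l * g a) \<le> 1 + l * g a + (l * g a)\<^sup>2 / 2 + \<bar>l * g a\<bar> ^ 3 * exp \<bar>l * g a\<bar> / 6"
      by (rule exp_le_cubic_Taylor)
    also have "\<bar>l * g a\<bar> ^ 3 * exp \<bar>l * g a\<bar> \<le> (l * B) ^ 3 * exp (l * B)"
      using abs_mult_le[OF l, of a] by (intro mult_mono power_mono) auto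
    finally show "exp (l * g a) \<le> (1 + l ^ 3 * B ^ 3 * exp (l * B) / 6) + l * g a + l\<^sup>2 / 2 * (g a)\<^sup>2"
      by (simp add: power_mult_distrib)
  qed
  then show ?thesis
    by (simp only: expectation_quadratic)
qed

lemma mgf_le_quadratic:
  assumes l: "0 \<le> l"
  shows "mgf q g l \<le> 1 + l\<^sup>2 * B\<^sup>2 * exp (l * B) / 2"
proof -
  have "mgf q g l \<le> (\<Sum>a\<in>UNIV. q a * ((1 + l\<^sup>2 * B\<^sup>2 * exp (l * B) / 2) + l * g a + 0 * (g a)\<^sup>2))"
    unfolding mgf_def
  proof (intro sum_mono mult_left_mono q_nonneg)
    fix a
    have "exp (l * g a) - 1 - l * g a \<le> (l * g a)\<^sup>2 * exp \<bar>l * g a\<bar> / 2"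
      using abs_exp_minus_one_minus_le[of "l * g a"] by linarith
    also have "(l * g a)\<^sup>2 * exp \<bar>l * g a\<bar> \<le> (l * B)\<^sup>2 * exp (l * B)"
      using abs_mult_le[OF l, of a] square_mult_le[OF l, of a] by (intro mult_mono) auto
    finally show "exp (l * g a) \<le> (1 + l\<^sup>2 * B\<^sup>2 * exp (l * B) / 2) + l * g a + 0 * (g a)\<^sup>2"
      by (simp add: power_mult_distrib)
  qed
  then show ?thesis
    by (simp only: expectation_quadratic)
qed

lemma mgf_ge_cubic:
  assumes l: "0 \<le> l"
  shows "1 + l\<^sup>2 * V / 2 - l ^ 3 * B ^ 3 / 6 \<le> mgf q g l"
proof -
  have "(\<Sum>a\<in>UNIV. q a * ((1 - l ^ 3 * B ^ 3 / 6) + l * g a + l\<^sup>2 / 2 * (g a)\<^sup>2)) \<le> mgf q g l"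
    unfolding mgf_def
  proof (intro sum_mono mult_left_mono q_nonneg)
    fix a
    have "\<bar>(l * g a) ^ 3\<bar> \<le> (l * B) ^ 3"
      using abs_mult_le[OF l, of a] by (metis power_abs power_mono abs_ge_zero)
    then have "- ((l * B) ^ 3) \<le> (l * g a) ^ 3"
      by linarith
    then have "(1 - l ^ 3 * B ^ 3 / 6) + l * g a + l\<^sup>2 / 2 * (g a)\<^sup>2
        \<le> 1 + l * g a + (l * g a)\<^sup>2 / 2 + (l * g a) ^ 3 / 6"
      by (simp add: power_mult_distrib)
    also have "\<dots> \<le> exp (l * g a)"
      by (rule cubic_Taylor_le_exp)
    finally show "(1 - l ^ 3 * B ^ 3 / 6) + l * g a + l\<^sup>2 / 2 * (g a)\<^sup>2 \<le> exp (l * g a)" .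
  qed
  then show ?thesis
    by (simp only: expectation_quadratic)
qed

lemma abs_sum_exp_mult_minus_le:
  assumes l: "0 \<le> l"
  shows "\<bar>(\<Sum>a\<in>UNIV. q a * exp (l * g a) * g a) - l * V\<bar> \<le> l\<^sup>2 * B ^ 3 * exp (l * B) / 2"
proof -
  let ?r = "\<lambda>a. exp (l * g a) - 1 - l * g a"
  have "(\<Sum>a\<in>UNIV. q a * (g a * ?r a))
      = (\<Sum>a\<in>UNIV. q a * exp (l * g a) * g a - q a * g a - l * (q a * (g a)\<^sup>2))"
    by (intro sum.cong) (auto simp: algebra_simps power2_eq_square)
  also have "\<dots> = (\<Sum>a\<in>UNIV. q a * exp (l * g a) * g a) - (\<Sum>a\<in>UNIV. q a * g a) - l * (\<Sum>a\<in>UNIV. q a * (g a)\<^sup>2)"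
    by (simp add: sum_subtractf sum_distrib_left)
  finally have eq: "(\<Sum>a\<in>UNIV. q a * exp (l * g a) * g a) - l * V = (\<Sum>a\<in>UNIV. q a * (g a * ?r a))"
    using mean Vdef by simp
  have "\<bar>\<Sum>a\<in>UNIV. q a * (g a * ?r a)\<bar> \<le> (\<Sum>a\<in>UNIV. q a * (B * ((l * B)\<^sup>2 * exp (l * B) / 2)))"
  proof (rule order_trans[OF sum_abs], intro sum_mono)
    fix a
    have "\<bar>?r a\<bar> \<le> (l * g a)\<^sup>2 * exp \<bar>l * g a\<bar> / 2"
      by (rule abs_exp_minus_one_minus_le)
    also have "\<dots> \<le> (l * B)\<^sup>2 * exp (l * B) / 2"
      using abs_mult_le[OF l, of a] square_mult_le[OF l, of a] by (intro divide_right_mono mult_mono) auto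
    finally have "\<bar>g a * ?r a\<bar> \<le> B * ((l * B)\<^sup>2 * exp (l * B) / 2)"
      unfolding abs_mult using gB[of a] by (intro mult_mono) auto
    then have "q a * \<bar>g a * ?r a\<bar> \<le> q a * (B * ((l * B)\<^sup>2 * exp (l * B) / 2))"
      by (rule mult_left_mono) (rule q_nonneg)
    then show "\<bar>q a * (g a * ?r a)\<bar> \<le> q a * (B * ((l * B)\<^sup>2 * exp (l * B) / 2))"
      using q_nonneg[of a] by (simp add: abs_mult)
  qed
  also have "\<dots> = (\<Sum>a\<in>UNIV. q a) * (B * ((l * B)\<^sup>2 * exp (l * B) / 2))"
    by (rule sum_distrib_right[symmetric])
  also have "\<dots> = l\<^sup>2 * B ^ 3 * exp (l * B) / 2"
    using sum_q by (simp add: power_mult_distrib power3_eq_cube power2_eq_square)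
  finally show ?thesis
    using eq by simp
qed

definition K :: real where
  "K = (B ^ 3 + V * B\<^sup>2) * exp B / 2"

lemma abs_tilted_mean_minus_le:
  assumes l: "0 \<le> l" "l \<le> 1"
  shows "\<bar>(\<Sum>a\<in>UNIV. tilted q g l a * g a) - l * V\<bar> \<le> l\<^sup>2 * K"
proof -
  define T where "T = (\<Sum>a\<in>UNIV. q a * exp (l * g a) * g a)"
  define M where "M = mgf q g l"
  have M1: "1 \<le> M"
    unfolding M_def by (rule mgf_ge_1)
  have T: "\<bar>T - l * V\<bar> \<le> l\<^sup>2 * B ^ 3 * exp (l * B) / 2"
    unfolding T_def by (rule abs_sum_exp_mult_minus_le[OF l(1)])
  have M2: "M - 1 \<le> l\<^sup>2 * B\<^sup>2 * exp (l * B) / 2"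
    using mgf_le_quadratic[OF l(1)] by (simp add: M_def)
  have e: "exp (l * B) \<le> exp B"
    using l B_nonneg mult_right_mono[of l 1 B] by simp
  have "(\<Sum>a\<in>UNIV. tilted q g l a * g a) - l * V = (T - l * V) / M - l * V * (M - 1) / M"
    using M1 by (simp add: T_def M_def tilted_def sum_divide_distrib[symmetric] field_simps)
  then have "\<bar>(\<Sum>a\<in>UNIV. tilted q g l a * g a) - l * V\<bar> \<le> \<bar>(T - l * V) / M\<bar> + \<bar>l * V * (M - 1) / M\<bar>"
    by (simp only: abs_triangle_ineq4)
  also have "\<dots> \<le> \<bar>T - l * V\<bar> + l * V * (M - 1)"
  proof (rule add_mono)
    show "\<bar>(T - l * V) / M\<bar> \<le> \<bar>T - l * V\<bar>"
      using M1 by (simp add: abs_divide divide_le_eq mult_le_cancel_left1)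
    have "0 \<le> l * V * (M - 1)"
      using M1 l Vpos by simp
    then show "\<bar>l * V * (M - 1) / M\<bar> \<le> l * V * (M - 1)"
      using M1 by (simp add: abs_divide divide_le_eq mult_le_cancel_left1)
  qed
  also have "\<dots> \<le> l\<^sup>2 * B ^ 3 * exp B / 2 + 1 * V * (l\<^sup>2 * B\<^sup>2 * exp B / 2)"
  proof (rule add_mono)
    show "\<bar>T - l * V\<bar> \<le> l\<^sup>2 * B ^ 3 * exp B / 2"
      using B_nonneg e by (intro order.trans[OF T] divide_right_mono mult_left_mono) auto
    have "M - 1 \<le> l\<^sup>2 * B\<^sup>2 * exp B / 2"
      using e by (intro order.trans[OF M2] divide_right_mono mult_left_mono) auto
    then show "l * V * (M - 1) \<le> 1 * V * (l\<^sup>2 * B\<^sup>2 * exp B / 2)"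
      using l Vpos M1 by (intro mult_mono) auto
  qed
  also have "\<dots> = l\<^sup>2 * K"
    by (simp add: K_def algebra_simps)
  finally show ?thesis .
qed

lemma tilted_prob_far_from_mean_le:
  assumes l: "0 \<le> l" "l \<le> 1" "l * V \<le> 1" and d: "0 < d"
  shows "prob_sum (tilted q g l) g n (\<lambda>s. d \<le> \<bar>s - real n * (l * V)\<bar>)
    \<le> (real n * (B + 1)\<^sup>2 + real n * real n * (l\<^sup>2 * K)\<^sup>2) / d\<^sup>2"
proof -
  let ?p = "tilted q g l" and ?c = "l * V"
  have p: "pmf_on ?p"
    by (rule pmf_on_tilted[OF q])
  have "(\<Sum>a\<in>UNIV. ?p a * (g a - ?c)\<^sup>2) \<le> (\<Sum>a\<in>UNIV. ?p a * (B + 1)\<^sup>2)"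
  proof (intro sum_mono mult_left_mono pmf_on_nonneg[OF p])
    fix a
    have "0 \<le> ?c"
      using l Vpos by simp
    then have "\<bar>g a - ?c\<bar> \<le> B + 1"
      using gB[of a] l by (simp add: abs_le_iff)
    then show "(g a - ?c)\<^sup>2 \<le> (B + 1)\<^sup>2"
      by (metis abs_le_square_iff abs_of_nonneg add_nonneg_nonneg B_nonneg zero_le_one)
  qed
  then have var: "(\<Sum>a\<in>UNIV. ?p a * (g a - ?c)\<^sup>2) \<le> (B + 1)\<^sup>2"
    using pmf_on_sum[OF p] by (simp add: sum_distrib_right[symmetric])
  have "(\<Sum>a\<in>UNIV. ?p a * (g a - ?c)) = (\<Sum>a\<in>UNIV. ?p a * g a) - ?c"
    using pmf_on_sum[OF p] by (simp add: algebra_simps sum_subtractf sum_distrib_left[symmetric])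
  then have "(\<Sum>a\<in>UNIV. ?p a * (g a - ?c))\<^sup>2 \<le> (l\<^sup>2 * K)\<^sup>2"
    using abs_tilted_mean_minus_le[OF l(1,2)] by (metis abs_le_square_iff abs_of_nonneg abs_ge_zero order_trans)
  then have "real n * (\<Sum>a\<in>UNIV. ?p a * (g a - ?c)\<^sup>2) + real n * real n * (\<Sum>a\<in>UNIV. ?p a * (g a - ?c))\<^sup>2
      \<le> real n * (B + 1)\<^sup>2 + real n * real n * (l\<^sup>2 * K)\<^sup>2"
    using var by (intro add_mono mult_left_mono) auto
  then show ?thesis
    using d by (intro order.trans[OF prob_sum_Chebyshev[OF p d]] divide_right_mono) auto
qed

lemma exp_le_mgf_power:
  assumes l: "0 \<le> l" "l * B ^ 3 \<le> 3 * V" "l\<^sup>2 * V \<le> 2"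
  shows "exp (real n * (l\<^sup>2 * V / 2 - l ^ 3 * B ^ 3 / 6 - (l\<^sup>2 * V / 2)\<^sup>2)) \<le> mgf q g l ^ n"
proof -
  define u where "u = l\<^sup>2 * V / 2 - l ^ 3 * B ^ 3 / 6"
  have "l ^ 3 * B ^ 3 = l\<^sup>2 * (l * B ^ 3)"
    by (simp add: power2_eq_square power3_eq_cube)
  also have "\<dots> \<le> l\<^sup>2 * (3 * V)"
    using l by (intro mult_left_mono) auto
  also have "\<dots> = 3 * (l\<^sup>2 * V)"
    by simp
  finally have u0: "0 \<le> u"
    unfolding u_def by linarith
  have u1: "u \<le> l\<^sup>2 * V / 2"
    using l B_nonneg by (simp add: u_def)
  have "u - (l\<^sup>2 * V / 2)\<^sup>2 \<le> u - u\<^sup>2"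
    using u0 u1 by (simp add: power_mono)
  also have "\<dots> \<le> ln (1 + u)"
    using u0 u1 l by (intro ln_one_plus_pos_lower_bound) auto
  finally have "exp (real n * (u - (l\<^sup>2 * V / 2)\<^sup>2)) \<le> exp (real n * ln (1 + u))"
    by (simp add: mult_left_mono)
  also have "\<dots> = (1 + u) ^ n"
    using u0 by (simp add: exp_of_nat_mult)
  also have "\<dots> \<le> mgf q g l ^ n"
    using mgf_ge_cubic[OF l(1)] u0 by (intro power_mono) (auto simp: u_def)
  finally show ?thesis
    by (simp add: u_def)
qed

text \<open>Chernoff bound with the tilting parameter \<open>\<xi>/V\<close>.\<close>

lemma prob_sum_ge_le_exp:
  assumes xi: "0 < \<xi>"
  shows "prob_sum q g n (\<lambda>s. real n * \<xi> * (1 + r) \<le> s)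
     \<le> exp (- (real n * \<xi>\<^sup>2) * ((1 + r) / V - 1 / (2 * V) - \<xi> * B ^ 3 * exp (\<xi> * B / V) / (6 * V ^ 3)))"
proof -
  define l where "l = \<xi> / V"
  have l0: "0 \<le> l"
    using xi Vpos by (simp add: l_def)
  define u where "u = l\<^sup>2 * V / 2 + l ^ 3 * B ^ 3 * exp (l * B) / 6"
  have "prob_sum q g n (\<lambda>s. real n * \<xi> * (1 + r) \<le> s) \<le> exp (- l * (real n * \<xi> * (1 + r))) * mgf q g l ^ n"
    by (rule prob_sum_Chernoff[OF q l0])
  also have "\<dots> \<le> exp (- l * (real n * \<xi> * (1 + r))) * exp u ^ n"
  proof -
    have "mgf q g l \<le> exp u"
      using mgf_le_cubic[OF l0] exp_ge_add_one_self[of u] unfolding u_def by linarith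
    then show ?thesis
      using mgf_pos[OF q, of g l] by (intro mult_left_mono power_mono) auto
  qed
  also have "\<dots> = exp (- l * (real n * \<xi> * (1 + r)) + real n * u)"
    by (simp only: exp_of_nat_mult exp_add)
  also have "- l * (real n * \<xi> * (1 + r)) + real n * u
      = - (real n * \<xi>\<^sup>2) * ((1 + r) / V - 1 / (2 * V) - \<xi> * B ^ 3 * exp (\<xi> * B / V) / (6 * V ^ 3))"
    using Vpos unfolding u_def l_def by (simp add: field_simps power2_eq_square power3_eq_cube)
  finally show ?thesis .
qed

lemma exp_le_prob_sum_greater_tilted:
  assumes l: "0 \<le> l" "l \<le> 1" "l * V \<le> 1" "l * B ^ 3 \<le> 3 * V" "l\<^sup>2 * V \<le> 2" and d: "0 < d"
    and Chebyshev: "(real n * (B + 1)\<^sup>2 + real n * real n * (l\<^sup>2 * K)\<^sup>2) / d\<^sup>2 \<le> 1 / 2"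
  shows "exp (- l * (real n * (l * V) + d) + real n * (l\<^sup>2 * V / 2 - l ^ 3 * B ^ 3 / 6 - (l\<^sup>2 * V / 2)\<^sup>2)) / 2
    \<le> prob_sum q g n (\<lambda>s. real n * (l * V) - d < s)"
proof -
  let ?c = "real n * (l * V)"
  have "prob_sum (tilted q g l) g n (\<lambda>s. d \<le> \<bar>s - ?c\<bar>) \<le> 1 / 2"
    using tilted_prob_far_from_mean_le[OF l(1-3) d, of n] Chebyshev by linarith
  then have "1 / 2 \<le> prob_sum (tilted q g l) g n (\<lambda>s. \<not> d \<le> \<bar>s - ?c\<bar>)"
    using prob_sum_not[OF pmf_on_tilted[OF q]] by simp
  also have "\<dots> \<le> prob_sum (tilted q g l) g n (\<lambda>s. ?c - d < s \<and> s \<le> ?c + d)"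
    by (intro prob_sum_mono pmf_on_tilted[OF q]) auto
  finally have window: "1 / 2 \<le> \<dots>" .
  have "exp (- l * (?c + d) + real n * (l\<^sup>2 * V / 2 - l ^ 3 * B ^ 3 / 6 - (l\<^sup>2 * V / 2)\<^sup>2)) / 2
      = exp (- l * (?c + d)) * exp (real n * (l\<^sup>2 * V / 2 - l ^ 3 * B ^ 3 / 6 - (l\<^sup>2 * V / 2)\<^sup>2)) * (1 / 2)"
    by (simp only: exp_add)
  also have "\<dots> \<le> exp (- l * (?c + d)) * mgf q g l ^ n * prob_sum (tilted q g l) g n (\<lambda>s. ?c - d < s \<and> s \<le> ?c + d)"
    using exp_le_mgf_power[OF l(1,4,5), of n] mgf_pos[OF q, of g l] window
    by (intro mult_mono mult_left_mono) auto
  also have "\<dots> \<le> prob_sum q g n (\<lambda>s. ?c - d < s)"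
    by (rule prob_sum_greater_ge_tilted[OF q l(1)])
  finally show ?thesis .
qed

text \<open>Tilting with \<open>l = \<xi>(1 + \<rho>)/V\<close> moves the mean of the sum to \<open>n\<xi>(1 + \<rho>)\<close>;
  Chebyshev keeps half of the tilted mass within \<open>d = n\<rho>\<xi>/4\<close> of it, i.e. above the threshold.\<close>

lemma exp_le_prob_sum_greater:
  assumes xi: "0 < \<xi>" and rho: "0 < \<rho>" "\<rho> \<le> 1" and n: "0 < n" and r: "r \<le> \<rho> / 2"
    and small: "\<xi> * (1 + \<rho>) / V \<le> 1" "\<xi> * (1 + \<rho>) \<le> 1"
      "\<xi> * (1 + \<rho>) / V * B ^ 3 \<le> 3 * V" "(\<xi> * (1 + \<rho>) / V)\<^sup>2 * V \<le> 2"
    and Chebyshev: "16 * (B + 1)\<^sup>2 / (\<rho>\<^sup>2 * (real n * \<xi>\<^sup>2))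
        + 16 * \<xi>\<^sup>2 * (1 + \<rho>) ^ 4 * K\<^sup>2 / (V ^ 4 * \<rho>\<^sup>2) \<le> 1 / 2"
  shows "exp (- (real n * \<xi>\<^sup>2) * ((1 + \<rho>) * (1 + 5 * \<rho> / 4) / V - (1 + \<rho>)\<^sup>2 / (2 * V)
           + \<xi> * (1 + \<rho>) ^ 3 * B ^ 3 / (6 * V ^ 3) + \<xi>\<^sup>2 * (1 + \<rho>) ^ 4 / (4 * V\<^sup>2))) / 2
     \<le> prob_sum q g n (\<lambda>s. real n * \<xi> * (1 + r) < s)"
proof -
  define l where "l = \<xi> * (1 + \<rho>) / V"
  define d where "d = real n * \<rho> * \<xi> / 4"
  have l: "0 \<le> l" "l \<le> 1" "l * V \<le> 1" "l * B ^ 3 \<le> 3 * V" "l\<^sup>2 * V \<le> 2" and lV: "l * V = \<xi> * (1 + \<rho>)"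
    using xi rho Vpos small by (simp_all add: l_def)
  have d: "0 < d"
    using n rho xi by (simp add: d_def)
  have "real n * (B + 1)\<^sup>2 / d\<^sup>2 = 16 * (B + 1)\<^sup>2 / (\<rho>\<^sup>2 * (real n * \<xi>\<^sup>2))"
    using n xi rho by (simp add: d_def field_simps power2_eq_square)
  moreover have "real n * real n * (l\<^sup>2 * K)\<^sup>2 / d\<^sup>2 = 16 * \<xi>\<^sup>2 * (1 + \<rho>) ^ 4 * K\<^sup>2 / (V ^ 4 * \<rho>\<^sup>2)"
    using n xi rho Vpos by (simp add: l_def d_def field_simps power2_eq_square power4_eq_xxxx)
  ultimately have "(real n * (B + 1)\<^sup>2 + real n * real n * (l\<^sup>2 * K)\<^sup>2) / d\<^sup>2 \<le> 1 / 2"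
    using Chebyshev by (simp add: add_divide_distrib)
  note tilted = exp_le_prob_sum_greater_tilted[OF l d this]
  have "- l * (real n * (l * V) + d) + real n * (l\<^sup>2 * V / 2 - l ^ 3 * B ^ 3 / 6 - (l\<^sup>2 * V / 2)\<^sup>2)
      = - (real n * \<xi>\<^sup>2) * ((1 + \<rho>) * (1 + 5 * \<rho> / 4) / V - (1 + \<rho>)\<^sup>2 / (2 * V)
           + \<xi> * (1 + \<rho>) ^ 3 * B ^ 3 / (6 * V ^ 3) + \<xi>\<^sup>2 * (1 + \<rho>) ^ 4 / (4 * V\<^sup>2))"
    using Vpos unfolding l_def d_def
    by (simp add: field_simps power2_eq_square power3_eq_cube power4_eq_xxxx)
  moreover have "prob_sum q g n (\<lambda>s. real n * (l * V) - d < s) \<le> prob_sum q g n (\<lambda>s. real n * \<xi> * (1 + r) < s)"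
  proof (intro prob_sum_mono[OF q])
    have "real n * \<xi> * (1 + r) \<le> real n * \<xi> * (1 + 3 * \<rho> / 4)"
      using n xi r rho by (intro mult_left_mono) auto
    also have "\<dots> = real n * (l * V) - d"
      unfolding lV d_def by (simp add: algebra_simps)
    finally show "real n * (l * V) - d < s \<Longrightarrow> real n * \<xi> * (1 + r) < s" for s
      by linarith
  qed
  ultimately show ?thesis
    using tilted by simp
qed
lemma eventually_prob_sum_ge_le_exp:
  assumes xi: "\<And>n. 0 < \<xi> n" "\<xi> \<longlonglongrightarrow> 0" and \<delta>: "(\<lambda>n. \<delta> n / (real n * \<xi> n)) \<longlonglongrightarrow> 0"
    and eps: "0 < \<epsilon>"
  shows "eventually (\<lambda>n. prob_sum q g n (\<lambda>s. real n * \<xi> n + \<delta> n \<le> s)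
    \<le> exp (- (real n * (\<xi> n)\<^sup>2) * (1 / (2 * V) - \<epsilon>))) sequentially"
proof -
  define r where "r n = \<delta> n / (real n * \<xi> n)" for n
  define \<beta> where "\<beta> n = (1 + r n) / V - 1 / (2 * V) - \<xi> n * B ^ 3 * exp (\<xi> n * B / V) / (6 * V ^ 3)" for n
  have "\<beta> \<longlonglongrightarrow> (1 + 0) / V - 1 / (2 * V) - 0 * B ^ 3 * exp (0 * B / V) / (6 * V ^ 3)"
    unfolding \<beta>_def r_def by (intro tendsto_intros xi \<delta>) (use Vpos in auto)
  then have "\<beta> \<longlonglongrightarrow> 1 / (2 * V)"
    using Vpos by (simp add: field_simps)
  then have "eventually (\<lambda>n. 1 / (2 * V) - \<epsilon> < \<beta> n) sequentially"
    using eps by (intro order_tendstoD(1)) auto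
  with eventually_gt_at_top[of 0] show ?thesis
  proof eventually_elim
    case (elim n)
    have "real n * \<xi> n + \<delta> n = real n * \<xi> n * (1 + r n)"
      using elim(1) xi(1)[of n] by (simp add: r_def field_simps)
    then have "prob_sum q g n (\<lambda>s. real n * \<xi> n + \<delta> n \<le> s) \<le> exp (- (real n * (\<xi> n)\<^sup>2) * \<beta> n)"
      unfolding \<beta>_def using prob_sum_ge_le_exp[OF xi(1)] by simp
    also have "\<dots> \<le> exp (- (real n * (\<xi> n)\<^sup>2) * (1 / (2 * V) - \<epsilon>))"
      using elim by (simp add: mult_left_mono)
    finally show ?case .
  qed
qed

lemma lower_exponent_le:
  assumes "0 \<le> \<rho>" "\<rho> \<le> 1"
  shows "(1 + \<rho>) * (1 + 5 * \<rho> / 4) / V - (1 + \<rho>)\<^sup>2 / (2 * V) \<le> 1 / (2 * V) + 2 * \<rho> / V"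
proof -
  have "(1 + \<rho>) * (1 + 5 * \<rho> / 4) / V - (1 + \<rho>)\<^sup>2 / (2 * V) = (1 / 2 + 5 * \<rho> / 4 + 3 * \<rho>\<^sup>2 / 4) / V"
    using Vpos by (simp add: field_simps power2_eq_square)
  also have "\<dots> \<le> (1 / 2 + 2 * \<rho>) / V"
  proof -
    have "\<rho>\<^sup>2 \<le> \<rho>"
      using assms by (simp add: power2_eq_square mult_left_le_one_le)
    then show ?thesis
      using Vpos by (intro divide_right_mono) auto
  qed
  also have "\<dots> = 1 / (2 * V) + 2 * \<rho> / V"
    using Vpos by (simp add: field_simps)
  finally show ?thesis .
qed

lemma eventually_tilting_conditions:
  assumes xi: "\<xi> \<longlonglongrightarrow> 0" and nxi: "filterlim (\<lambda>n. real n * (\<xi> n)\<^sup>2) at_top sequentially"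
    and rho: "0 < \<rho>"
  shows "eventually (\<lambda>n. \<xi> n * (1 + \<rho>) / V \<le> 1 \<and> \<xi> n * (1 + \<rho>) \<le> 1
      \<and> \<xi> n * (1 + \<rho>) / V * B ^ 3 \<le> 3 * V \<and> (\<xi> n * (1 + \<rho>) / V)\<^sup>2 * V \<le> 2
      \<and> 16 * (B + 1)\<^sup>2 / (\<rho>\<^sup>2 * (real n * (\<xi> n)\<^sup>2))
        + 16 * (\<xi> n)\<^sup>2 * (1 + \<rho>) ^ 4 * K\<^sup>2 / (V ^ 4 * \<rho>\<^sup>2) \<le> 1 / 2) sequentially"
proof -
  have l: "(\<lambda>n. \<xi> n * (1 + \<rho>) / V) \<longlonglongrightarrow> 0" and c: "(\<lambda>n. \<xi> n * (1 + \<rho>)) \<longlonglongrightarrow> 0"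
    using tendsto_mult_left_zero[OF xi, of "1 + \<rho>"] tendsto_divide_zero[OF tendsto_mult_left_zero[OF xi], of "1 + \<rho>" V]
    by auto
  have "filterlim (\<lambda>n. \<rho>\<^sup>2 * (real n * (\<xi> n)\<^sup>2)) at_top sequentially"
    using rho by (intro filterlim_tendsto_pos_mult_at_top[OF tendsto_const _ nxi]) auto
  then have "(\<lambda>n. 16 * (B + 1)\<^sup>2 / (\<rho>\<^sup>2 * (real n * (\<xi> n)\<^sup>2))) \<longlonglongrightarrow> 0"
    by (intro tendsto_divide_0[OF tendsto_const] filterlim_at_top_imp_at_infinity)
  moreover have "(\<lambda>n. 16 * (\<xi> n)\<^sup>2 * (1 + \<rho>) ^ 4 * K\<^sup>2 / (V ^ 4 * \<rho>\<^sup>2)) \<longlonglongrightarrow> 16 * 0\<^sup>2 * (1 + \<rho>) ^ 4 * K\<^sup>2 / (V ^ 4 * \<rho>\<^sup>2)"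
    by (intro tendsto_intros xi) (use Vpos rho in auto)
  ultimately have "eventually (\<lambda>n. 16 * (B + 1)\<^sup>2 / (\<rho>\<^sup>2 * (real n * (\<xi> n)\<^sup>2))
        + 16 * (\<xi> n)\<^sup>2 * (1 + \<rho>) ^ 4 * K\<^sup>2 / (V ^ 4 * \<rho>\<^sup>2) < 1 / 2) sequentially"
    by (intro order_tendstoD(2)[OF tendsto_add]) auto
  moreover have "eventually (\<lambda>n. \<xi> n * (1 + \<rho>) / V < 1) sequentially"
    by (rule order_tendstoD(2)[OF l]) simp
  moreover have "eventually (\<lambda>n. \<xi> n * (1 + \<rho>) < 1) sequentially"
    by (rule order_tendstoD(2)[OF c]) simp
  moreover have "eventually (\<lambda>n. \<xi> n * (1 + \<rho>) / V * B ^ 3 < 3 * V) sequentially"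
    using order_tendstoD(2)[OF tendsto_mult_left_zero[OF l, of "B ^ 3"], of "3 * V"] Vpos by simp
  moreover have "eventually (\<lambda>n. (\<xi> n * (1 + \<rho>) / V)\<^sup>2 * V < 2) sequentially"
  proof -
    have "(\<lambda>n. (\<xi> n * (1 + \<rho>) / V)\<^sup>2) \<longlonglongrightarrow> 0"
      using tendsto_power[OF l, of 2] by simp
    then show ?thesis
      by (rule order_tendstoD(2)[OF tendsto_mult_left_zero]) simp
  qed
  ultimately show ?thesis
    by eventually_elim auto
qed

text \<open>The slack \<open>\<rho>\<close> in the tilting parameter and the factor \<open>1/2\<close> from Chebyshev cost
  at most \<open>\<epsilon> n\<xi>\<^sup>2\<close> in the exponent.\<close>

lemma eventually_exp_le_prob_sum_greater:
  assumes xi: "\<And>n. 0 < \<xi> n" "\<xi> \<longlonglongrightarrow> 0" and \<delta>: "(\<lambda>n. \<delta> n / (real n * \<xi> n)) \<longlonglongrightarrow> 0"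
    and eps: "0 < \<epsilon>" and nxi: "filterlim (\<lambda>n. real n * (\<xi> n)\<^sup>2) at_top sequentially"
  shows "eventually (\<lambda>n. exp (- (real n * (\<xi> n)\<^sup>2) * (1 / (2 * V) + \<epsilon>))
    \<le> prob_sum q g n (\<lambda>s. real n * \<xi> n + \<delta> n < s)) sequentially"
proof -
  define \<rho> where "\<rho> = min 1 (\<epsilon> * V / 8)"
  have rho: "0 < \<rho>" "\<rho> \<le> 1" "2 * \<rho> / V \<le> \<epsilon> / 4"
    using eps Vpos by (auto simp: \<rho>_def field_simps)
  define \<gamma> where "\<gamma> n = (1 + \<rho>) * (1 + 5 * \<rho> / 4) / V - (1 + \<rho>)\<^sup>2 / (2 * V)
    + \<xi> n * (1 + \<rho>) ^ 3 * B ^ 3 / (6 * V ^ 3) + (\<xi> n)\<^sup>2 * (1 + \<rho>) ^ 4 / (4 * V\<^sup>2)" for n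
  have "\<gamma> \<longlonglongrightarrow> (1 + \<rho>) * (1 + 5 * \<rho> / 4) / V - (1 + \<rho>)\<^sup>2 / (2 * V)
    + 0 * (1 + \<rho>) ^ 3 * B ^ 3 / (6 * V ^ 3) + 0\<^sup>2 * (1 + \<rho>) ^ 4 / (4 * V\<^sup>2)"
    unfolding \<gamma>_def by (intro tendsto_intros xi) (use Vpos in auto)
  moreover have "(1 + \<rho>) * (1 + 5 * \<rho> / 4) / V - (1 + \<rho>)\<^sup>2 / (2 * V) < 1 / (2 * V) + \<epsilon> / 2"
    using lower_exponent_le[of \<rho>] rho eps by simp
  ultimately have "eventually (\<lambda>n. \<gamma> n < 1 / (2 * V) + \<epsilon> / 2) sequentially"
    by (intro order_tendstoD(2)) auto
  moreover have "eventually (\<lambda>n. \<delta> n / (real n * \<xi> n) < \<rho> / 2) sequentially"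
    using rho by (intro order_tendstoD(2)[OF \<delta>]) auto
  moreover have "eventually (\<lambda>n. 2 * ln 2 / \<epsilon> \<le> real n * (\<xi> n)\<^sup>2) sequentially"
    using nxi by (simp add: filterlim_at_top)
  ultimately show ?thesis
    using eventually_tilting_conditions[OF xi(2) nxi rho(1)] eventually_gt_at_top[of 0]
  proof eventually_elim
    case (elim n)
    let ?A = "real n * (\<xi> n)\<^sup>2"
    have thr: "real n * \<xi> n + \<delta> n = real n * \<xi> n * (1 + \<delta> n / (real n * \<xi> n))"
      using elim(5) xi(1)[of n] by (simp add: field_simps)
    have "ln 2 \<le> ?A * (\<epsilon> / 2)"
      using elim(3) eps by (simp add: field_simps)
    then have "exp (- ?A * (1 / (2 * V) + \<epsilon>)) \<le> exp (- ?A * (1 / (2 * V) + \<epsilon> / 2) - ln 2)"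
      by (simp add: algebra_simps)
    also have "\<dots> = exp (- ?A * (1 / (2 * V) + \<epsilon> / 2)) / 2"
      by (simp add: exp_diff)
    also have "\<dots> \<le> exp (- ?A * \<gamma> n) / 2"
      using elim(1) by (simp add: mult_left_mono)
    also have "\<dots> \<le> prob_sum q g n (\<lambda>s. real n * \<xi> n + \<delta> n < s)"
      unfolding \<gamma>_def thr
      by (rule exp_le_prob_sum_greater[OF xi(1) rho(1,2)]) (use elim in auto)
    finally show ?case .
  qed
qed

end

lemma bounded_centered_uminus: "bounded_centered q g V B \<Longrightarrow> bounded_centered q (\<lambda>a. - g a) V B"
  unfolding bounded_centered_def by (simp add: sum_negf)

section \<open>Logarithmic asymptotics\<close>

lemma neg_ln_div_gt_of_le_exp:
  fixes X A :: real
  assumes "0 < X" "0 < \<epsilon>" "ln 2 < A * \<epsilon>" "X \<le> 2 * exp (- A * (L - \<epsilon>))"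
  shows "L - 2 * \<epsilon> < - ln X / A"
proof -
  have A: "0 < A"
    using assms(2,3) ln_gt_zero[of 2] by (smt (verit) mult_nonpos_nonneg)
  have "ln X \<le> ln (2 * exp (- A * (L - \<epsilon>)))"
    using assms(1,4) by simp
  then have "ln X \<le> ln 2 - A * (L - \<epsilon>)"
    by (simp add: ln_mult)
  then have "(L - 2 * \<epsilon>) * A < - ln X"
    using assms(3) by (simp add: algebra_simps)
  then show ?thesis
    by (simp only: pos_less_divide_eq[OF A])
qed

lemma neg_ln_div_less_of_exp_le:
  fixes X A :: real
  assumes "0 < \<epsilon>" "ln 2 < A * \<epsilon>" "exp (- A * (L + \<epsilon>)) / 2 \<le> X"
  shows "- ln X / A < L + 2 * \<epsilon>"
proof -
  have A: "0 < A"
    using assms(1,2) ln_gt_zero[of 2] by (smt (verit) mult_nonpos_nonneg)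
  have "ln (exp (- A * (L + \<epsilon>)) / 2) \<le> ln X"
    using assms(3) by (subst ln_le_cancel_iff) (auto intro: less_le_trans[OF _ assms(3)])
  then have "- A * (L + \<epsilon>) - ln 2 \<le> ln X"
    by (simp add: ln_div)
  then have "- ln X < (L + 2 * \<epsilon>) * A"
    using assms(2) by (simp add: algebra_simps)
  then show ?thesis
    by (simp only: pos_divide_less_eq[OF A])
qed

lemma tendsto_neg_ln_div_of_exp_bounds:
  fixes X A :: "nat \<Rightarrow> real"
  assumes A: "filterlim A at_top sequentially"
    and upper: "\<And>\<epsilon>. 0 < \<epsilon> \<Longrightarrow> eventually (\<lambda>n. X n \<le> 2 * exp (- A n * (L - \<epsilon>))) sequentially"
    and lower: "\<And>\<epsilon>. 0 < \<epsilon> \<Longrightarrow> eventually (\<lambda>n. exp (- A n * (L + \<epsilon>)) / 2 \<le> X n) sequentially"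
  shows "(\<lambda>n. - ln (X n) / A n) \<longlonglongrightarrow> L"
proof -
  have big: "eventually (\<lambda>n. ln 2 < A n * \<epsilon>) sequentially" if "0 < \<epsilon>" for \<epsilon>
    using A that by (simp add: filterlim_at_top_dense pos_divide_less_eq[symmetric])
  show ?thesis
  proof (rule order_tendstoI)
    fix a assume "a < L"
    then have e: "0 < (L - a) / 2"
      by simp
    show "eventually (\<lambda>n. a < - ln (X n) / A n) sequentially"
      using upper[OF e] lower[OF e] big[OF e]
    proof eventually_elim
      case (elim n)
      then have "0 < X n"
        using exp_gt_zero[of "- A n * (L + (L - a) / 2)"] by linarith
      moreover have "L - 2 * ((L - a) / 2) = a"
        by (simp add: field_simps)
      ultimately show ?case
        using neg_ln_div_gt_of_le_exp[OF _ e elim(3,1)] by metis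
    qed
  next
    fix a assume "L < a"
    then have e: "0 < (a - L) / 2"
      by simp
    show "eventually (\<lambda>n. - ln (X n) / A n < a) sequentially"
      using lower[OF e] big[OF e]
    proof eventually_elim
      case (elim n)
      have "L + 2 * ((a - L) / 2) = a"
        by (simp add: field_simps)
      then show ?case
        using neg_ln_div_less_of_exp_le[OF e elim(2,1)] by metis
    qed
  qed
qed

lemma half_exp_le_of_tail_bound:
  fixes A D L X Q :: real
  assumes A: "0 \<le> A" "2 * ln 2 / L \<le> A" and L: "0 < L" and D: "A * (2 * L) \<le> D"
    and e: "0 < e" "e \<le> \<epsilon>" "e \<le> L / 2"
    and Q: "exp (- A * (L + e)) \<le> Q" and X: "Q - exp (- D) \<le> X"
  shows "exp (- A * (L + \<epsilon>)) / 2 \<le> X"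
proof -
  have "A * e \<le> A * (L / 2)"
    using A e by (intro mult_left_mono) auto
  then have "ln 2 - D \<le> - A * (L + e)"
    using A D L by (simp add: field_simps)
  then have "exp (ln 2 - D) \<le> exp (- A * (L + e))"
    by simp
  then have "2 * exp (- D) \<le> exp (- A * (L + e))"
    by (simp add: exp_diff exp_minus divide_inverse)
  moreover have "exp (- A * (L + \<epsilon>)) \<le> exp (- A * (L + e))"
    using A e by (simp add: mult_left_mono)
  ultimately show ?thesis
    using Q X by linarith
qed

text \<open>The form in which the bounds on \<open>P\<^sub>c\<^sup>*\<close> are available: up to a correction
  \<open>e\<^sup>-\<^sup>D\<close> that is exponentially smaller, \<open>X\<close> is sandwiched between tail
  probabilities with exponent \<open>L A\<close>.\<close>

lemma tendsto_neg_ln_div_of_tail_bounds: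
  fixes X P Q A D :: "nat \<Rightarrow> real"
  assumes L: "0 < L" and A: "filterlim A at_top sequentially" and D: "\<And>n. A n * (2 * L) \<le> D n"
    and upper: "\<And>n. X n \<le> exp (- D n) + P n"
    and P: "\<And>\<epsilon>. 0 < \<epsilon> \<Longrightarrow> eventually (\<lambda>n. P n \<le> exp (- A n * (L - \<epsilon>))) sequentially"
    and lower: "\<And>n. Q n - exp (- D n) \<le> X n"
    and Q: "\<And>\<epsilon>. 0 < \<epsilon> \<Longrightarrow> eventually (\<lambda>n. exp (- A n * (L + \<epsilon>)) \<le> Q n) sequentially"
  shows "(\<lambda>n. - ln (X n) / A n) \<longlonglongrightarrow> L"
proof (rule tendsto_neg_ln_div_of_exp_bounds[OF A])
  have A0: "eventually (\<lambda>n. 0 \<le> A n) sequentially"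
    using A by (simp add: filterlim_at_top)
  fix \<epsilon> :: real assume e: "0 < \<epsilon>"
  show "eventually (\<lambda>n. X n \<le> 2 * exp (- A n * (L - \<epsilon>))) sequentially"
    using P[OF e] A0
  proof eventually_elim
    case (elim n)
    have "A n * (L - \<epsilon>) \<le> D n"
      using elim(2) L e D[of n] by (smt (verit) mult_left_mono)
    then have "exp (- D n) \<le> exp (- A n * (L - \<epsilon>))"
      by simp
    then show ?case
      using upper[of n] elim(1) by linarith
  qed
  have e': "0 < min \<epsilon> (L / 2)" "min \<epsilon> (L / 2) \<le> \<epsilon>" "min \<epsilon> (L / 2) \<le> L / 2"
    using e L by auto
  have "eventually (\<lambda>n. 2 * ln 2 / L \<le> A n) sequentially"
    using A by (simp add: filterlim_at_top)
  with Q[OF e'(1)] A0 show "eventually (\<lambda>n. exp (- A n * (L + \<epsilon>)) / 2 \<le> X n) sequentially"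
    by eventually_elim (use half_exp_le_of_tail_bound L D e' lower in blast)
qed

lemma filterlim_real_mult_square_at_top:
  assumes "filterlim (\<lambda>n. sqrt (real n) * \<xi> n) at_top sequentially"
  shows "filterlim (\<lambda>n. real n * (\<xi> n)\<^sup>2) at_top sequentially"
proof -
  have "filterlim (\<lambda>n. (sqrt (real n) * \<xi> n) ^ 2) at_top sequentially"
    by (rule filterlim_pow_at_top[OF _ assms]) simp
  then show ?thesis
    by (simp add: power_mult_distrib)
qed

lemma tendsto_offset_div_zero:
  assumes xi: "\<And>n. 0 < \<xi> n" "\<xi> \<longlonglongrightarrow> 0" and nxi: "filterlim (\<lambda>n. real n * (\<xi> n)\<^sup>2) at_top sequentially"
  shows "(\<lambda>n. (c + real n * (\<xi> n)\<^sup>2 / a) / (real n * \<xi> n)) \<longlonglongrightarrow> 0"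
proof -
  have "(\<lambda>n. c * \<xi> n / (real n * (\<xi> n)\<^sup>2) + \<xi> n / a) \<longlonglongrightarrow> 0"
    using tendsto_add[OF tendsto_divide_0[OF tendsto_mult_right_zero[OF xi(2)] filterlim_at_top_imp_at_infinity[OF nxi]]
        tendsto_divide_zero[OF xi(2)]]
    by simp
  moreover have "eventually (\<lambda>n. c * \<xi> n / (real n * (\<xi> n)\<^sup>2) + \<xi> n / a
      = (c + real n * (\<xi> n)\<^sup>2 / a) / (real n * \<xi> n)) sequentially"
    using eventually_gt_at_top[of 0]
    by eventually_elim (use xi(1) in \<open>simp add: field_simps power2_eq_square\<close>)
  ultimately show ?thesis
    by (auto intro: Lim_transform_eventually)
qed

text \<open>These library simp rules would turn the weighted indicator sums below into sums over
  subsets and break the bookkeeping of the decoding probabilities.\<close>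

declare sum_of_bool_eq [simp del] sum_mult_of_bool_eq [simp del] sum_of_bool_mult_eq [simp del]

lemma finite_tuples [simp]: "finite (tuples M n :: (nat \<Rightarrow> nat \<Rightarrow> 'a::finite) set)"
  unfolding tuples_def by (intro finite_PiE) auto

lemma sum_tuples_prod:
  fixes F :: "nat \<Rightarrow> (nat \<Rightarrow> 'a::finite) \<Rightarrow> real"
  shows "(\<Sum>ys\<in>tuples M n. \<Prod>m<M. F m (ys m)) = (\<Prod>m<M. \<Sum>y\<in>seqs n. F m y)"
  unfolding tuples_def by (subst prod_sum_PiE) auto

lemma prod_lessThan_if_eq:
  fixes f :: "nat \<Rightarrow> real"
  assumes "w < M"
  shows "(\<Prod>m<M. if m = w then a m else f m) = a w * (\<Prod>m\<in>{..<M} - {w}. f m)"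
proof -
  have "(\<Prod>m\<in>{..<M} - {w}. if m = w then a m else f m) = (\<Prod>m\<in>{..<M} - {w}. f m)"
    by (intro prod.cong) auto
  then show ?thesis
    using prod.remove[of "{..<M}" w "\<lambda>m. if m = w then a m else f m"] assms by simp
qed

lemma sum_dmc_eq_sum_iid_pairs:
  fixes Q :: "'y::finite \<Rightarrow> 'z::finite \<Rightarrow> real" and h :: "'y \<Rightarrow> 'z \<Rightarrow> real" and \<phi> :: "real \<Rightarrow> real"
  shows "(\<Sum>y\<in>seqs n. \<Sum>z\<in>seqs n. dmc n Q y z * \<phi> (\<Sum>i<n. h (y i) (z i)))
       = (\<Sum>x\<in>seqs n. iid n (\<lambda>(y, z). Q y z) x * \<phi> (\<Sum>i<n. (\<lambda>(y, z). h y z) (x i)))"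
proof -
  have "(\<Sum>y\<in>seqs n. \<Sum>z\<in>seqs n. dmc n Q y z * \<phi> (\<Sum>i<n. h (y i) (z i)))
      = (\<Sum>(y, z)\<in>seqs n \<times> seqs n. dmc n Q y z * \<phi> (\<Sum>i<n. h (y i) (z i)))"
    by (rule sum.cartesian_product)
  also have "\<dots> = (\<Sum>x\<in>seqs n. iid n (\<lambda>(y, z). Q y z) x * \<phi> (\<Sum>i<n. (\<lambda>(y, z). h y z) (x i)))"
  proof (rule sum.reindex_bij_witness[where j = "\<lambda>(y, z). restrict (\<lambda>k. (y k, z k)) {..<n}"
        and i = "\<lambda>x. (restrict (\<lambda>k. fst (x k)) {..<n}, restrict (\<lambda>k. snd (x k)) {..<n})"])
    fix a :: "(nat \<Rightarrow> 'y) \<times> (nat \<Rightarrow> 'z)" assume a: "a \<in> seqs n \<times> seqs n"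
    obtain y z where yz: "a = (y, z)" by (cases a)
    have y: "y \<in> {..<n} \<rightarrow>\<^sub>E UNIV" and z: "z \<in> {..<n} \<rightarrow>\<^sub>E UNIV" using a yz by (auto simp: seqs_def)
    show "(\<lambda>x. (restrict (\<lambda>k. fst (x k)) {..<n}, restrict (\<lambda>k. snd (x k)) {..<n}))
           ((\<lambda>(y, z). restrict (\<lambda>k. (y k, z k)) {..<n}) a) = a"
      using y z yz by (auto simp: fun_eq_iff PiE_def extensional_def restrict_def)
    show "(\<lambda>(y, z). restrict (\<lambda>k. (y k, z k)) {..<n}) a \<in> seqs n"
      using yz by (simp add: seqs_def)
    show "iid n (\<lambda>(y, z). Q y z) ((\<lambda>(y, z). restrict (\<lambda>k. (y k, z k)) {..<n}) a)
           * \<phi> (\<Sum>i<n. (\<lambda>(y, z). h y z) ((\<lambda>(y, z). restrict (\<lambda>k. (y k, z k)) {..<n}) a i))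
         = (case a of (y, z) \<Rightarrow> dmc n Q y z * \<phi> (\<Sum>i<n. h (y i) (z i)))"
      using yz by (simp add: iid_def dmc_def)
  next
    fix b :: "nat \<Rightarrow> 'y \<times> 'z" assume b: "b \<in> seqs n"
    then have bE: "b \<in> {..<n} \<rightarrow>\<^sub>E UNIV" by (simp add: seqs_def)
    show "(\<lambda>(y, z). restrict (\<lambda>k. (y k, z k)) {..<n})
          ((\<lambda>x. (restrict (\<lambda>k. fst (x k)) {..<n}, restrict (\<lambda>k. snd (x k)) {..<n})) b) = b"
      using bE by (auto simp: fun_eq_iff PiE_def extensional_def restrict_def)
    show "(\<lambda>x. (restrict (\<lambda>k. fst (x k)) {..<n}, restrict (\<lambda>k. snd (x k)) {..<n})) b \<in> seqs n \<times> seqs n"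
      by (simp add: seqs_def)
  qed
  finally show ?thesis .
qed

section \<open>The identification model\<close>

locale bio_setting =
  fixes PX :: "'x::finite \<Rightarrow> real" and WY :: "'x \<Rightarrow> 'y::finite \<Rightarrow> real" and WZ :: "'x \<Rightarrow> 'z::finite \<Rightarrow> real"
  assumes PX: "pmf_on PX" and WY: "stoch_chan WY" and WZ: "stoch_chan WZ"
begin

abbreviation "pyz \<equiv> PYZ PX WY WZ"
abbreviation "py \<equiv> PY PX WY WZ"
abbreviation "pz \<equiv> PZ PX WY WZ"
abbreviation "idens \<equiv> info_dens PX WY WZ"
abbreviation "cap \<equiv> C_bio PX WY WZ"
abbreviation "disp \<equiv> V_bio PX WY WZ"

definition dens_ratio :: "nat \<Rightarrow> (nat \<Rightarrow> 'y) \<Rightarrow> (nat \<Rightarrow> 'z) \<Rightarrow> real" where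
  "dens_ratio n y z = dmc n pyz y z / (iid n py y * iid n pz z)"

definition pair_pyz :: "'y \<times> 'z \<Rightarrow> real" where
  "pair_pyz = (\<lambda>(y, z). pyz y z)"

definition cdens :: "'y \<times> 'z \<Rightarrow> real" where
  "cdens = (\<lambda>(y, z). idens y z - cap)"

lemma PX_nonneg: "0 \<le> PX x"
  using PX by (simp add: pmf_on_def)

lemma WY_nonneg: "0 \<le> WY x y" and sum_WY: "(\<Sum>y\<in>UNIV. WY x y) = 1"
  using WY by (simp_all add: stoch_chan_def pmf_on_def)

lemma WZ_nonneg: "0 \<le> WZ x z" and sum_WZ: "(\<Sum>z\<in>UNIV. WZ x z) = 1"
  using WZ by (simp_all add: stoch_chan_def pmf_on_def)

lemma pyz_nonneg: "0 \<le> pyz y z"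
  unfolding PYZ_def by (intro sum_nonneg mult_nonneg_nonneg PX_nonneg WY_nonneg WZ_nonneg)

lemma py_eq: "py y = (\<Sum>x\<in>UNIV. PX x * WY x y)"
proof -
  have "py y = (\<Sum>x\<in>UNIV. \<Sum>z\<in>UNIV. PX x * WY x y * WZ x z)"
    unfolding PY_def PYZ_def by (rule sum.swap)
  then show ?thesis
    by (simp add: sum_distrib_left[symmetric] sum_WZ)
qed

lemma pz_eq: "pz z = (\<Sum>x\<in>UNIV. PX x * WZ x z)"
proof -
  have "pz z = (\<Sum>x\<in>UNIV. \<Sum>y\<in>UNIV. PX x * WY x y * WZ x z)"
    unfolding PZ_def PYZ_def by (rule sum.swap)
  then show ?thesis
    by (simp add: sum_distrib_right[symmetric] sum_distrib_left[symmetric] sum_WY)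
qed

lemma pmf_on_py: "pmf_on py"
  unfolding pmf_on_def py_eq
  by (auto intro!: sum_nonneg mult_nonneg_nonneg PX_nonneg WY_nonneg
      simp: sum.swap[of _ UNIV] sum_distrib_left[symmetric] sum_WY pmf_on_sum[OF PX])

lemma pmf_on_pz: "pmf_on pz"
  unfolding pmf_on_def pz_eq
  by (auto intro!: sum_nonneg mult_nonneg_nonneg PX_nonneg WZ_nonneg
      simp: sum.swap[of _ UNIV] sum_distrib_left[symmetric] sum_WZ pmf_on_sum[OF PX])

lemma pyz_le_py: "pyz y z \<le> py y"
  unfolding PY_def by (rule member_le_sum) (auto simp: pyz_nonneg)

lemma pyz_le_pz: "pyz y z \<le> pz z"
  unfolding PZ_def by (rule member_le_sum) (auto simp: pyz_nonneg)

lemma pmf_on_pair_pyz: "pmf_on pair_pyz"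
proof -
  have "(\<Sum>a\<in>UNIV. pair_pyz a) = (\<Sum>y\<in>UNIV. \<Sum>z\<in>UNIV. pyz y z)"
    by (simp add: pair_pyz_def UNIV_Times_UNIV[symmetric] sum.cartesian_product del: UNIV_Times_UNIV)
  also have "\<dots> = 1"
    using pmf_on_py by (simp add: PY_def pmf_on_def)
  finally show ?thesis
    by (auto simp: pmf_on_def pair_pyz_def pyz_nonneg)
qed

lemma dmc_pyz_nonneg: "0 \<le> dmc n pyz y z"
  unfolding dmc_def by (intro prod_nonneg) (auto simp: pyz_nonneg)

lemma iid_py_nonneg: "0 \<le> iid n py y"
  by (rule iid_nonneg[OF pmf_on_py])

lemma iid_pz_nonneg: "0 \<le> iid n pz z"
  by (rule iid_nonneg[OF pmf_on_pz])

lemma sum_iid_py: "(\<Sum>y\<in>seqs n. iid n py y) = 1"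
  by (rule sum_iid[OF pmf_on_py])

lemma sum_iid_pz: "(\<Sum>z\<in>seqs n. iid n pz z) = 1"
  by (rule sum_iid[OF pmf_on_pz])

lemma sum_dmc_pyz_fst: "(\<Sum>y\<in>seqs n. dmc n pyz y z) = iid n pz z"
  unfolding dmc_def iid_def by (subst sum_seqs_prod[of "\<lambda>i a. pyz a (z i)"]) (simp add: PZ_def)

lemma sum_dmc_pyz: "(\<Sum>y\<in>seqs n. \<Sum>z\<in>seqs n. dmc n pyz y z) = 1"
  by (subst sum.swap) (simp add: sum_dmc_pyz_fst sum_iid_pz)

lemma pyz_pos_of_dmc_pyz_pos:
  assumes "0 < dmc n pyz y z" "i < n"
  shows "0 < pyz (y i) (z i)"
proof (rule ccontr)
  assume "\<not> 0 < pyz (y i) (z i)"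
  then have "pyz (y i) (z i) = 0"
    using pyz_nonneg[of "y i" "z i"] by simp
  then have "dmc n pyz y z = 0"
    using assms(2) unfolding dmc_def by (intro prod_zero) auto
  then show False
    using assms(1) by simp
qed

lemma iid_py_iid_pz_pos:
  assumes "0 < dmc n pyz y z"
  shows "0 < iid n py y" "0 < iid n pz z"
  using pyz_pos_of_dmc_pyz_pos[OF assms] pyz_le_py pyz_le_pz unfolding iid_def
  by (auto intro!: prod_pos) (metis less_le_trans)+

lemma dens_ratio_eq_exp:
  assumes "0 < dmc n pyz y z"
  shows "dens_ratio n y z = exp (\<Sum>i<n. idens (y i) (z i))"
proof -
  have "exp (\<Sum>i<n. idens (y i) (z i)) = (\<Prod>i<n. exp (idens (y i) (z i)))"
    by (simp add: exp_sum)
  also have "\<dots> = (\<Prod>i<n. pyz (y i) (z i) / (py (y i) * pz (z i)))"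
  proof (intro prod.cong refl)
    fix i assume "i \<in> {..<n}"
    then have q: "0 < pyz (y i) (z i)"
      using pyz_pos_of_dmc_pyz_pos[OF assms] by auto
    then have "0 < py (y i)" "0 < pz (z i)"
      using pyz_le_py pyz_le_pz by (auto intro: less_le_trans)
    then show "exp (idens (y i) (z i)) = pyz (y i) (z i) / (py (y i) * pz (z i))"
      using q unfolding info_dens_def by simp
  qed
  also have "\<dots> = dens_ratio n y z"
    unfolding dens_ratio_def dmc_def iid_def by (simp add: prod_dividef prod.distrib)
  finally show ?thesis
    by simp
qed

lemma sum_iid_PX_dmc_WY: "(\<Sum>x\<in>seqs n. iid n PX x * dmc n WY x y) = iid n py y"
  unfolding iid_def dmc_def
  by (simp add: prod.distrib[symmetric] sum_seqs_prod[of "\<lambda>i a. PX a * WY a (y i)"] py_eq)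

lemma sum_iid_PX_dmc_WY_dmc_WZ: "(\<Sum>x\<in>seqs n. iid n PX x * dmc n WY x y * dmc n WZ x z) = dmc n pyz y z"
  unfolding iid_def dmc_def
  by (simp add: prod.distrib[symmetric] sum_seqs_prod[of "\<lambda>i a. PX a * WY a (y i) * WZ a (z i)"] PYZ_def)

text \<open>The joint law of the stored sequences and of \<open>Z\<close> given \<open>W = w\<close>: summing out the feature
  vectors leaves \<open>Y(m)\<close>, \<open>m \<noteq> w\<close>, i.i.d. \<open>P\<^sub>Y\<close> and independent of \<open>(Y(w), Z) \<sim> P\<^sub>Y\<^sub>Z\<close>.\<close>

definition joint_law :: "nat \<Rightarrow> nat \<Rightarrow> nat \<Rightarrow> (nat \<Rightarrow> nat \<Rightarrow> 'y) \<Rightarrow> (nat \<Rightarrow> 'z) \<Rightarrow> real" where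
  "joint_law n M w ys z = (\<Prod>m\<in>{..<M} - {w}. iid n py (ys m)) * dmc n pyz (ys w) z"

lemma joint_law_nonneg: "0 \<le> joint_law n M w ys z"
  unfolding joint_law_def by (intro mult_nonneg_nonneg prod_nonneg iid_py_nonneg dmc_pyz_nonneg)

lemma sum_tuples_features:
  assumes w: "w < M"
  shows "(\<Sum>xs\<in>tuples M n. (\<Prod>m<M. iid n PX (xs m) * dmc n WY (xs m) (ys m)) * dmc n WZ (xs w) z)
     = joint_law n M w ys z"
proof -
  define F where "F m x = iid n PX x * dmc n WY x (ys m) * (if m = w then dmc n WZ x z else 1)" for m x
  have "(\<Prod>m<M. iid n PX (xs m) * dmc n WY (xs m) (ys m)) * dmc n WZ (xs w) z = (\<Prod>m<M. F m (xs m))" for xs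
    using w by (simp add: F_def prod.distrib prod.delta)
  then have "(\<Sum>xs\<in>tuples M n. (\<Prod>m<M. iid n PX (xs m) * dmc n WY (xs m) (ys m)) * dmc n WZ (xs w) z)
      = (\<Prod>m<M. \<Sum>x\<in>seqs n. F m x)"
    by (simp add: sum_tuples_prod)
  also have "\<dots> = (\<Prod>m<M. if m = w then dmc n pyz (ys w) z else iid n py (ys m))"
    by (intro prod.cong refl) (simp add: F_def sum_iid_PX_dmc_WY sum_iid_PX_dmc_WY_dmc_WZ)
  also have "\<dots> = joint_law n M w ys z"
    unfolding joint_law_def by (subst prod_lessThan_if_eq[OF w]) simp
  finally show ?thesis .
qed

lemma prob_correct_eq:
  "prob_correct PX WY WZ n M g
     = (\<Sum>w<M. 1 / real M * (\<Sum>ys\<in>tuples M n. \<Sum>z\<in>seqs n. joint_law n M w ys z * of_bool (g ys z = w)))"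
  unfolding prob_correct_def
proof (intro sum.cong refl arg_cong2[where f = "(*)"])
  fix w assume w: "w \<in> {..<M}"
  have "(\<Sum>xs\<in>tuples M n. \<Sum>ys\<in>tuples M n. \<Sum>z\<in>seqs n.
           (\<Prod>m<M. iid n PX (xs m) * dmc n WY (xs m) (ys m)) * dmc n WZ (xs w) z * (if g ys z = w then 1 else 0))
      = (\<Sum>ys\<in>tuples M n. \<Sum>z\<in>seqs n. \<Sum>xs\<in>tuples M n.
           (\<Prod>m<M. iid n PX (xs m) * dmc n WY (xs m) (ys m)) * dmc n WZ (xs w) z * of_bool (g ys z = w))"
    by (subst sum.swap) (simp add: sum.swap[of _ "tuples M n" "seqs n"] of_bool_def)
  also have "\<dots> = (\<Sum>ys\<in>tuples M n. \<Sum>z\<in>seqs n. joint_law n M w ys z * of_bool (g ys z = w))"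
    using w by (simp add: sum_distrib_right[symmetric] sum_tuples_features del: sum_mult_of_bool_eq)
  finally show "(\<Sum>xs\<in>tuples M n. \<Sum>ys\<in>tuples M n. \<Sum>z\<in>seqs n.
           (\<Prod>m<M. iid n PX (xs m) * dmc n WY (xs m) (ys m)) * dmc n WZ (xs w) z * (if g ys z = w then 1 else 0))
      = (\<Sum>ys\<in>tuples M n. \<Sum>z\<in>seqs n. joint_law n M w ys z * of_bool (g ys z = w))" .
qed

lemma sum_tuples_prod_remove_mult:
  assumes w: "w < M"
  shows "(\<Sum>ys\<in>tuples M n. (\<Prod>m\<in>{..<M} - {w}. iid n py (ys m)) * H (ys w)) = (\<Sum>y\<in>seqs n. H y)"
proof -
  have "(\<Sum>ys\<in>tuples M n. (\<Prod>m\<in>{..<M} - {w}. iid n py (ys m)) * H (ys w))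
      = (\<Sum>ys\<in>tuples M n. \<Prod>m<M. (if m = w then H (ys m) else iid n py (ys m)))"
    using prod_lessThan_if_eq[OF w, of "\<lambda>m. H (_ m)"] by (simp add: mult.commute)
  also have "\<dots> = (\<Prod>m<M. if m = w then (\<Sum>y\<in>seqs n. H y) else 1)"
    by (subst sum_tuples_prod) (intro prod.cong; simp add: sum_iid_py)
  also have "\<dots> = (\<Sum>y\<in>seqs n. H y)"
    using w by simp
  finally show ?thesis .
qed

lemma sum_tuples_prod_remove_mult_mult:
  assumes w: "w < M" and k: "k < M" "k \<noteq> w"
  shows "(\<Sum>ys\<in>tuples M n. (\<Prod>m\<in>{..<M} - {w}. iid n py (ys m)) * H (ys w) * G (ys k))
       = (\<Sum>y\<in>seqs n. H y) * (\<Sum>y\<in>seqs n. iid n py y * G y)"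
proof -
  have "(\<Sum>ys\<in>tuples M n. (\<Prod>m\<in>{..<M} - {w}. iid n py (ys m)) * H (ys w) * G (ys k))
      = (\<Sum>ys\<in>tuples M n. (\<Prod>m\<in>{..<M} - {w}. if m = k then iid n py (ys m) * G (ys m) else iid n py (ys m))
          * H (ys w))"
  proof (intro sum.cong refl)
    fix ys :: "nat \<Rightarrow> nat \<Rightarrow> 'y"
    have "(\<Prod>m\<in>{..<M} - {w}. if m = k then iid n py (ys m) * G (ys m) else iid n py (ys m))
        = (\<Prod>m\<in>{..<M} - {w}. iid n py (ys m) * (if m = k then G (ys m) else 1))"
      by (intro prod.cong) auto
    also have "\<dots> = (\<Prod>m\<in>{..<M} - {w}. iid n py (ys m)) * G (ys k)"
      using k by (simp add: prod.distrib prod.delta)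
    finally show "(\<Prod>m\<in>{..<M} - {w}. iid n py (ys m)) * H (ys w) * G (ys k)
        = (\<Prod>m\<in>{..<M} - {w}. if m = k then iid n py (ys m) * G (ys m) else iid n py (ys m)) * H (ys w)"
      by (simp add: mult_ac)
  qed
  also have "\<dots> = (\<Sum>ys\<in>tuples M n. \<Prod>m<M. if m = w then H (ys m)
      else if m = k then iid n py (ys m) * G (ys m) else iid n py (ys m))"
    using prod_lessThan_if_eq[OF w, of "\<lambda>m. H (_ m)"] by (simp add: mult.commute)
  also have "\<dots> = (\<Prod>m<M. if m = w then (\<Sum>y\<in>seqs n. H y)
      else if m = k then (\<Sum>y\<in>seqs n. iid n py y * G y) else 1)"
    by (subst sum_tuples_prod) (intro prod.cong; simp add: sum_iid_py)
  also have "\<dots> = (\<Sum>y\<in>seqs n. H y) * (\<Sum>y\<in>seqs n. iid n py y * G y)"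
    using w k by (simp add: prod_lessThan_if_eq prod.delta)
  finally show ?thesis .
qed

lemma sum_joint_law_item:
  assumes "w < M"
  shows "(\<Sum>ys\<in>tuples M n. \<Sum>z\<in>seqs n. joint_law n M w ys z * F (ys w) z)
    = (\<Sum>y\<in>seqs n. \<Sum>z\<in>seqs n. dmc n pyz y z * F y z)"
  using sum_tuples_prod_remove_mult[OF assms, of n "\<lambda>y. \<Sum>z\<in>seqs n. dmc n pyz y z * F y z"]
  by (simp add: joint_law_def sum_distrib_left mult.assoc)

lemma sum_joint_law_other_item:
  assumes "w < M" "k < M" "k \<noteq> w"
  shows "(\<Sum>ys\<in>tuples M n. \<Sum>z\<in>seqs n. joint_law n M w ys z * F (ys k) z)
    = (\<Sum>z\<in>seqs n. iid n pz z * (\<Sum>y\<in>seqs n. iid n py y * F y z))"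
proof -
  have "(\<Sum>ys\<in>tuples M n. \<Sum>z\<in>seqs n. joint_law n M w ys z * F (ys k) z)
      = (\<Sum>z\<in>seqs n. \<Sum>ys\<in>tuples M n. (\<Prod>m\<in>{..<M} - {w}. iid n py (ys m)) * dmc n pyz (ys w) z * F (ys k) z)"
    unfolding joint_law_def by (rule sum.swap)
  also have "\<dots> = (\<Sum>z\<in>seqs n. (\<Sum>y\<in>seqs n. dmc n pyz y z) * (\<Sum>y\<in>seqs n. iid n py y * F y z))"
    using assms by (intro sum.cong refl sum_tuples_prod_remove_mult_mult)
  finally show ?thesis
    by (simp add: sum_dmc_pyz_fst)
qed

definition ratio_tail :: "nat \<Rightarrow> real \<Rightarrow> real" where
  "ratio_tail n thr = (\<Sum>y\<in>seqs n. \<Sum>z\<in>seqs n. dmc n pyz y z * of_bool (thr < dens_ratio n y z))"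

lemma sum_joint_law_ratio_tail:
  assumes "w < M"
  shows "(\<Sum>ys\<in>tuples M n. \<Sum>z\<in>seqs n. joint_law n M w ys z * of_bool (thr < dens_ratio n (ys w) z))
    = ratio_tail n thr"
  unfolding ratio_tail_def by (rule sum_joint_law_item[OF assms])

subsection \<open>Converse\<close>

lemma dmc_pyz_le_threshold:
  assumes "0 \<le> thr"
  shows "dmc n pyz y z \<le> thr * iid n py y * iid n pz z + dmc n pyz y z * of_bool (thr < dens_ratio n y z)"
proof (cases "0 < dmc n pyz y z")
  case False
  then show ?thesis
    using assms dmc_pyz_nonneg[of n y z] iid_py_nonneg[of n y] iid_pz_nonneg[of n z] by simp
next
  case True
  note pos = iid_py_iid_pz_pos[OF True]
  show ?thesis
  proof (cases "thr < dens_ratio n y z")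
    case False
    then have "dmc n pyz y z \<le> thr * (iid n py y * iid n pz z)"
      using pos by (simp add: dens_ratio_def not_less divide_le_eq)
    then show ?thesis
      using False by (simp add: mult.assoc)
  qed (use pos assms in simp)
qed

lemma joint_law_le_threshold:
  assumes "w < M" "0 \<le> thr"
  shows "joint_law n M w ys z \<le> thr * (\<Prod>m<M. iid n py (ys m)) * iid n pz z
    + joint_law n M w ys z * of_bool (thr < dens_ratio n (ys w) z)"
proof -
  let ?P = "\<Prod>m\<in>{..<M} - {w}. iid n py (ys m)"
  have "joint_law n M w ys z
      \<le> ?P * (thr * iid n py (ys w) * iid n pz z + dmc n pyz (ys w) z * of_bool (thr < dens_ratio n (ys w) z))"
    unfolding joint_law_def
    by (intro mult_left_mono dmc_pyz_le_threshold assms prod_nonneg) (simp add: iid_py_nonneg)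
  also have "\<dots> = thr * (\<Prod>m<M. iid n py (ys m)) * iid n pz z
      + joint_law n M w ys z * of_bool (thr < dens_ratio n (ys w) z)"
    using prod.remove[of "{..<M}" w "\<lambda>m. iid n py (ys m)"] assms(1)
    by (simp add: joint_law_def algebra_simps)
  finally show ?thesis .
qed

lemma sum_prod_iid_decoded_le_1:
  "(\<Sum>w<M. \<Sum>ys\<in>tuples M n. \<Sum>z\<in>seqs n. (\<Prod>m<M. iid n py (ys m)) * iid n pz z * of_bool (g ys z = w)) \<le> 1"
proof -
  have *: "(\<Sum>w<M. c * of_bool (a = w)) \<le> c" if "0 \<le> c" for c :: real and a :: nat
    using that by (simp add: sum_distrib_left[symmetric] of_bool_def sum.delta')
  have "(\<Sum>w<M. \<Sum>ys\<in>tuples M n. \<Sum>z\<in>seqs n. (\<Prod>m<M. iid n py (ys m)) * iid n pz z * of_bool (g ys z = w))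
      = (\<Sum>ys\<in>tuples M n. \<Sum>z\<in>seqs n. \<Sum>w<M. (\<Prod>m<M. iid n py (ys m)) * iid n pz z * of_bool (g ys z = w))"
    by (subst sum.swap) (simp add: sum.swap[of _ "{..<M}" "seqs n"])
  also have "\<dots> \<le> (\<Sum>ys\<in>tuples M n. \<Sum>z\<in>seqs n. (\<Prod>m<M. iid n py (ys m)) * iid n pz z)"
    by (intro sum_mono *) (simp add: prod_nonneg iid_py_nonneg iid_pz_nonneg)
  also have "\<dots> = 1"
    by (simp add: sum_distrib_left[symmetric] sum_iid_pz sum_tuples_prod[of "\<lambda>m. iid n py"] sum_iid_py)
  finally show ?thesis .
qed

text \<open>The hypothesis testing bound: where the density ratio of \<open>(Y(w), Z)\<close> is at most \<open>thr\<close>,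
  the joint law is dominated by \<open>thr\<close> times the product law, under which \<open>Z\<close> is independent
  of the database and no decoder is right with probability above \<open>1/M\<close>.\<close>

lemma prob_correct_le:
  assumes M: "1 \<le> M" and thr: "0 \<le> thr"
  shows "prob_correct PX WY WZ n M g \<le> thr / real M + ratio_tail n thr"
proof -
  let ?A = "\<lambda>w ys z. (\<Prod>m<M. iid n py (ys m)) * iid n pz z * of_bool (g ys z = w)"
  let ?B = "\<lambda>w ys z. joint_law n M w ys z * of_bool (thr < dens_ratio n (ys w) z)"
  have "prob_correct PX WY WZ n M g \<le> (\<Sum>w<M. 1 / real M * (\<Sum>ys\<in>tuples M n. \<Sum>z\<in>seqs n. thr * ?A w ys z + ?B w ys z))"
    unfolding prob_correct_eq
  proof (intro sum_mono mult_left_mono)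
    fix w ys z assume "w \<in> {..<M}"
    then show "joint_law n M w ys z * of_bool (g ys z = w) \<le> thr * ?A w ys z + ?B w ys z"
      using joint_law_le_threshold[of w M thr n ys z] joint_law_nonneg[of n M w ys z] thr by auto
  qed simp
  also have "\<dots> = thr / real M * (\<Sum>w<M. \<Sum>ys\<in>tuples M n. \<Sum>z\<in>seqs n. ?A w ys z)
      + (\<Sum>w<M. 1 / real M * (\<Sum>ys\<in>tuples M n. \<Sum>z\<in>seqs n. ?B w ys z))"
    by (simp add: sum.distrib distrib_left sum_distrib_left mult.assoc )
  also have "(\<Sum>w<M. 1 / real M * (\<Sum>ys\<in>tuples M n. \<Sum>z\<in>seqs n. ?B w ys z)) = ratio_tail n thr"
    using M by (simp add: sum_joint_law_ratio_tail)
  also have "thr / real M * (\<Sum>w<M. \<Sum>ys\<in>tuples M n. \<Sum>z\<in>seqs n. ?A w ys z) \<le> thr / real M"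
    using thr by (intro mult_left_le sum_prod_iid_decoded_le_1) auto
  finally show ?thesis
    by simp
qed

subsection \<open>Achievability\<close>

text \<open>The decoder outputs the first index whose density ratio exceeds \<open>thr\<close> (and the junk value of
  \<open>LEAST\<close> if there is none, which only lowers the success probability).\<close>

definition threshold_decoder :: "nat \<Rightarrow> real \<Rightarrow> (nat \<Rightarrow> nat \<Rightarrow> 'y) \<Rightarrow> (nat \<Rightarrow> 'z) \<Rightarrow> nat" where
  "threshold_decoder n thr ys z = (LEAST w. thr < dens_ratio n (ys w) z)"

lemma of_bool_threshold_decoder_ge:
  assumes w: "w < M"
  shows "of_bool (thr < dens_ratio n (ys w) z) - (\<Sum>k\<in>{..<M} - {w}. of_bool (thr < dens_ratio n (ys k) z))
    \<le> (of_bool (threshold_decoder n thr ys z = w) :: real)"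
proof (cases "\<exists>k\<in>{..<M} - {w}. thr < dens_ratio n (ys k) z")
  case True
  then obtain k where k: "k \<in> {..<M} - {w}" "thr < dens_ratio n (ys k) z"
    by blast
  have "(1::real) \<le> (\<Sum>k\<in>{..<M} - {w}. of_bool (thr < dens_ratio n (ys k) z))"
    using member_le_sum[OF k(1), of "\<lambda>k. of_bool (thr < dens_ratio n (ys k) z) :: real"] k(2)
    by simp
  then show ?thesis
    by (smt (verit) of_bool_less_eq_one zero_less_eq_of_bool)
next
  case False
  then have "thr < dens_ratio n (ys w) z \<Longrightarrow> threshold_decoder n thr ys z = w"
    unfolding threshold_decoder_def using w by (intro Least_equality) (auto simp: not_le[symmetric])
  then show ?thesis
    using False by auto
qed

lemma sum_iid_pz_iid_py_ratio_le:
  assumes thr: "0 < thr"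
  shows "(\<Sum>z\<in>seqs n. iid n pz z * (\<Sum>y\<in>seqs n. iid n py y * of_bool (thr < dens_ratio n y z))) \<le> 1 / thr"
proof -
  have "(\<Sum>z\<in>seqs n. iid n pz z * (\<Sum>y\<in>seqs n. iid n py y * of_bool (thr < dens_ratio n y z)))
      = (\<Sum>z\<in>seqs n. \<Sum>y\<in>seqs n. iid n py y * iid n pz z * of_bool (thr < dens_ratio n y z))"
    by (simp add: sum_distrib_left mult_ac )
  also have "\<dots> \<le> (\<Sum>z\<in>seqs n. \<Sum>y\<in>seqs n. dmc n pyz y z / thr)"
  proof (intro sum_mono)
    fix z y
    show "iid n py y * iid n pz z * of_bool (thr < dens_ratio n y z) \<le> dmc n pyz y z / thr"
    proof (cases "thr < dens_ratio n y z")
      case True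
      then have pos: "0 < iid n py y * iid n pz z"
        using thr iid_py_nonneg[of n y] iid_pz_nonneg[of n z] unfolding dens_ratio_def
        by (metis div_by_0 less_eq_real_def mult_nonneg_nonneg order.strict_trans)
      have "thr * (iid n py y * iid n pz z) < dmc n pyz y z"
        using True pos by (simp add: dens_ratio_def less_divide_eq)
      then show ?thesis
        using True thr by (simp add: field_simps)
    qed (use dmc_pyz_nonneg[of n y z] thr in simp)
  qed
  also have "\<dots> = 1 / thr"
    by (simp add: sum_divide_distrib[symmetric] sum.swap[of _ "seqs n" "seqs n"] sum_dmc_pyz)
  finally show ?thesis .
qed

lemma sum_joint_law_threshold_decoder_ge:
  assumes w: "w < M" and thr: "0 < thr"
  shows "ratio_tail n thr - real M / thr
    \<le> (\<Sum>ys\<in>tuples M n. \<Sum>z\<in>seqs n. joint_law n M w ys z * of_bool (threshold_decoder n thr ys z = w))"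
proof -
  let ?I = "\<lambda>ys k z. of_bool (thr < dens_ratio n (ys k) z) :: real"
  let ?K = "{..<M} - {w}"
  have "(\<Sum>k\<in>?K. \<Sum>ys\<in>tuples M n. \<Sum>z\<in>seqs n. joint_law n M w ys z * ?I ys k z) \<le> (\<Sum>k\<in>?K. 1 / thr)"
    using w thr sum_joint_law_other_item[of w M _ n "\<lambda>y z. of_bool (thr < dens_ratio n y z)"]
    by (intro sum_mono) (simp add: sum_iid_pz_iid_py_ratio_le)
  also have "\<dots> \<le> real M / thr"
    using w thr by (simp add: card_Diff_subset of_nat_diff divide_right_mono)
  finally have "ratio_tail n thr - real M / thr
      \<le> (\<Sum>ys\<in>tuples M n. \<Sum>z\<in>seqs n. joint_law n M w ys z * ?I ys w z)
        - (\<Sum>k\<in>?K. \<Sum>ys\<in>tuples M n. \<Sum>z\<in>seqs n. joint_law n M w ys z * ?I ys k z)"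
    using sum_joint_law_ratio_tail[OF w, of n thr] by linarith
  also have "\<dots> = (\<Sum>ys\<in>tuples M n. \<Sum>z\<in>seqs n. joint_law n M w ys z * (?I ys w z - (\<Sum>k\<in>?K. ?I ys k z)))"
    by (simp add: sum.swap[of _ ?K] sum_subtractf right_diff_distrib sum_distrib_left
        )
  also have "\<dots> \<le> (\<Sum>ys\<in>tuples M n. \<Sum>z\<in>seqs n. joint_law n M w ys z * of_bool (threshold_decoder n thr ys z = w))"
    by (intro sum_mono mult_left_mono of_bool_threshold_decoder_ge[OF w] joint_law_nonneg)
  finally show ?thesis .
qed

lemma prob_correct_threshold_decoder_ge:
  assumes M: "1 \<le> M" and thr: "0 < thr"
  shows "ratio_tail n thr - real M / thr \<le> prob_correct PX WY WZ n M (threshold_decoder n thr)"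
proof -
  have "ratio_tail n thr - real M / thr = (\<Sum>w<M. 1 / real M * (ratio_tail n thr - real M / thr))"
    using M by simp
  also have "\<dots> \<le> prob_correct PX WY WZ n M (threshold_decoder n thr)"
    unfolding prob_correct_eq
    by (intro sum_mono mult_left_mono sum_joint_law_threshold_decoder_ge thr) auto
  finally show ?thesis .
qed

lemma dmc_pyz_mult_of_bool_exp_less_dens_ratio:
  "dmc n pyz y z * of_bool (exp t < dens_ratio n y z)
    = dmc n pyz y z * of_bool (t < (\<Sum>i<n. idens (y i) (z i)))"
  using dmc_pyz_nonneg[of n y z] by (cases "0 < dmc n pyz y z") (simp_all add: dens_ratio_eq_exp)

lemma ratio_tail_exp_eq_prob_sum:
  "ratio_tail n (exp t) = prob_sum pair_pyz cdens n (\<lambda>s. t - real n * cap < s)"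
proof -
  have "ratio_tail n (exp t) = (\<Sum>y\<in>seqs n. \<Sum>z\<in>seqs n. dmc n pyz y z * of_bool (t < (\<Sum>i<n. idens (y i) (z i))))"
    unfolding ratio_tail_def by (simp add: dmc_pyz_mult_of_bool_exp_less_dens_ratio)
  also have "\<dots> = (\<Sum>x\<in>seqs n. iid n pair_pyz x * of_bool (t < (\<Sum>i<n. (\<lambda>(y, z). idens y z) (x i))))"
    unfolding pair_pyz_def by (rule sum_dmc_eq_sum_iid_pairs)
  also have "\<dots> = prob_sum pair_pyz cdens n (\<lambda>s. t - real n * cap < s)"
    unfolding prob_sum_def cdens_def by (simp add: case_prod_beta sum_subtractf)
  finally show ?thesis .
qed

lemma ratio_tail_le_1: "ratio_tail n thr \<le> 1"
proof -
  have "ratio_tail n thr \<le> (\<Sum>y\<in>seqs n. \<Sum>z\<in>seqs n. dmc n pyz y z)"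
    unfolding ratio_tail_def by (intro sum_mono mult_right_le_one_le) (simp_all add: dmc_pyz_nonneg)
  then show ?thesis
    by (simp add: sum_dmc_pyz)
qed

lemma sum_pair_pyz_eq_sum_support:
  "(\<Sum>(y, z)\<in>{(y, z). 0 < pyz y z}. pyz y z * f y z) = (\<Sum>a\<in>UNIV. pair_pyz a * (\<lambda>(y, z). f y z) a)"
proof -
  have "(\<Sum>a\<in>UNIV. pair_pyz a * (\<lambda>(y, z). f y z) a)
      = (\<Sum>a\<in>{(y, z). 0 < pyz y z}. pair_pyz a * (\<lambda>(y, z). f y z) a)"
    by (rule sum.mono_neutral_right)
      (auto simp: pair_pyz_def less_le pyz_nonneg)
  then show ?thesis
    by (simp add: pair_pyz_def case_prod_beta)
qed

lemma bounded_centered_cdens: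
  assumes "0 < disp"
  shows "bounded_centered pair_pyz cdens disp (\<Sum>a\<in>UNIV. \<bar>cdens a\<bar>)"
proof
  show "pmf_on pair_pyz"
    by (rule pmf_on_pair_pyz)
  have "(\<Sum>a\<in>UNIV. pair_pyz a * cdens a)
      = (\<Sum>a\<in>UNIV. pair_pyz a * (\<lambda>(y, z). idens y z) a) - cap * (\<Sum>a\<in>UNIV. pair_pyz a)"
    unfolding cdens_def by (simp add: case_prod_beta algebra_simps sum_subtractf sum_distrib_left)
  then show "(\<Sum>a\<in>UNIV. pair_pyz a * cdens a) = 0"
    using pmf_on_sum[OF pmf_on_pair_pyz] sum_pair_pyz_eq_sum_support[of idens] by (simp add: C_bio_def)
  show "disp = (\<Sum>a\<in>UNIV. pair_pyz a * (cdens a)\<^sup>2)"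
    unfolding V_bio_def using sum_pair_pyz_eq_sum_support[of "\<lambda>y z. (idens y z - cap)\<^sup>2"]
    by (simp add: cdens_def case_prod_beta)
  show "0 < disp"
    by (rule assms)
  show "\<bar>cdens a\<bar> \<le> (\<Sum>a\<in>UNIV. \<bar>cdens a\<bar>)" for a
    by (rule member_le_sum) auto
qed

definition num_items :: "nat \<Rightarrow> real \<Rightarrow> nat" where
  "num_items n R = nat \<lceil>exp (real n * R)\<rceil>"

lemma of_nat_num_items: "real (num_items n R) = of_int \<lceil>exp (real n * R)\<rceil>"
  using exp_gt_zero[of "real n * R"] unfolding num_items_def
  by (metis ceiling_le_zero linorder_not_le of_nat_nat order_less_imp_le)

lemma num_items_ge_1: "1 \<le> num_items n R"
  using exp_gt_zero[of "real n * R"] unfolding num_items_def by linarith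

lemma ln_num_items_ge: "real n * R \<le> ln (real (num_items n R))"
proof -
  have "exp (real n * R) \<le> real (num_items n R)"
    unfolding of_nat_num_items by (rule le_of_int_ceiling)
  then show ?thesis
    using num_items_ge_1[of n R] by (simp add: ln_ge_iff)
qed

lemma ln_num_items_le:
  assumes "0 \<le> R"
  shows "ln (real (num_items n R)) \<le> real n * R + ln 2"
proof -
  have "real (num_items n R) \<le> exp (real n * R) + 1"
    unfolding of_nat_num_items by (rule of_int_ceiling_le_add_one)
  also have "\<dots> \<le> 2 * exp (real n * R)"
    using assms by simp
  finally have "ln (real (num_items n R)) \<le> ln (2 * exp (real n * R))"
    using num_items_ge_1[of n R] by simp
  then show ?thesis
    by (simp add: ln_mult)
qed

lemma prob_correct_le_2:
  assumes "1 \<le> M"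
  shows "prob_correct PX WY WZ n M g \<le> 2"
proof -
  have "1 / real M \<le> 1"
    using assms by simp
  then show ?thesis
    using prob_correct_le[OF assms zero_le_one, of n g] ratio_tail_le_1[of n 1] by simp
qed

lemma prob_correct_le_pc_star:
  assumes "1 \<le> M" "real n * R \<le> ln (real M)"
  shows "prob_correct PX WY WZ n M g \<le> pc_star PX WY WZ n R"
  unfolding pc_star_def
proof (rule cSup_upper)
  show "prob_correct PX WY WZ n M g \<in> {prob_correct PX WY WZ n M g | M g. 1 \<le> M \<and> real n * R \<le> ln (real M)}"
    using assms by blast
  show "bdd_above {prob_correct PX WY WZ n M g | M g. 1 \<le> M \<and> real n * R \<le> ln (real M)}"
    by (rule bdd_aboveI[of _ 2]) (auto intro: prob_correct_le_2)
qed

lemma pc_star_le_exp_plus_prob_sum: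
  "pc_star PX WY WZ n R \<le> exp (- D) + prob_sum pair_pyz cdens n (\<lambda>s. real n * R - D - real n * cap < s)"
  unfolding pc_star_def
proof (rule cSup_least)
  show "{prob_correct PX WY WZ n M g | M g. 1 \<le> M \<and> real n * R \<le> ln (real M)} \<noteq> {}"
    using num_items_ge_1[of n R] ln_num_items_ge[of n R] by blast
next
  fix p assume "p \<in> {prob_correct PX WY WZ n M g | M g. 1 \<le> M \<and> real n * R \<le> ln (real M)}"
  then obtain M g where M: "1 \<le> M" "real n * R \<le> ln (real M)" and p: "p = prob_correct PX WY WZ n M g"
    by blast
  have "p \<le> exp (real n * R - D) / real M + ratio_tail n (exp (real n * R - D))"
    unfolding p by (rule prob_correct_le[OF M(1)]) simp
  also have "exp (real n * R - D) / real M = exp (real n * R - D - ln (real M))"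
    using M by (simp add: exp_diff)
  also have "\<dots> \<le> exp (- D)"
    using M by simp
  finally show "p \<le> exp (- D) + prob_sum pair_pyz cdens n (\<lambda>s. real n * R - D - real n * cap < s)"
    by (simp add: ratio_tail_exp_eq_prob_sum)
qed

lemma prob_correct_single_item: "prob_correct PX WY WZ n 1 (\<lambda>_ _. 0) = 1"
  using sum_joint_law_item[of 0 1 n "\<lambda>_ _. 1"] by (simp add: prob_correct_eq sum_dmc_pyz)

text \<open>For \<open>R \<le> 0\<close> the bound is trivial, since a single item is always identified.\<close>

lemma prob_sum_minus_exp_le_pc_star:
  "prob_sum pair_pyz cdens n (\<lambda>s. real n * R + ln 2 + D - real n * cap < s) - exp (- D)
    \<le> pc_star PX WY WZ n R"
proof (cases "0 \<le> R")
  case True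
  define t where "t = ln (real (num_items n R)) + D"
  have M: "1 \<le> num_items n R"
    by (rule num_items_ge_1)
  have "prob_sum pair_pyz cdens n (\<lambda>s. real n * R + ln 2 + D - real n * cap < s) - exp (- D)
      \<le> prob_sum pair_pyz cdens n (\<lambda>s. t - real n * cap < s) - exp (- D)"
    using ln_num_items_le[OF True, of n]
    by (intro diff_right_mono prob_sum_mono[OF pmf_on_pair_pyz]) (auto simp: t_def)
  also have "\<dots> = ratio_tail n (exp t) - real (num_items n R) / exp t"
  proof -
    have "real (num_items n R) / exp t = exp (- D)"
      using M by (simp add: t_def exp_add exp_minus field_simps)
    then show ?thesis
      by (simp only: ratio_tail_exp_eq_prob_sum)
  qed
  also have "\<dots> \<le> prob_correct PX WY WZ n (num_items n R) (threshold_decoder n (exp t))"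
    by (rule prob_correct_threshold_decoder_ge[OF M]) simp
  also have "\<dots> \<le> pc_star PX WY WZ n R"
    by (rule prob_correct_le_pc_star[OF M ln_num_items_ge])
  finally show ?thesis .
next
  case False
  then have "1 \<le> pc_star PX WY WZ n R"
    using prob_correct_le_pc_star[of 1 n R "\<lambda>_ _. 0"] prob_correct_single_item[of n]
    by (simp add: mult_nonneg_nonpos)
  then show ?thesis
    using prob_sum_le_1[OF pmf_on_pair_pyz] exp_gt_zero[of "- D"] by (smt (verit))
qed

lemma pc_star_above_cap_le:
  "pc_star PX WY WZ n (cap + x) \<le> exp (- D) + prob_sum pair_pyz cdens n (\<lambda>s. real n * x + - D \<le> s)"
proof -
  have "prob_sum pair_pyz cdens n (\<lambda>s. real n * (cap + x) - D - real n * cap < s)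
      \<le> prob_sum pair_pyz cdens n (\<lambda>s. real n * x + - D \<le> s)"
    by (intro prob_sum_mono[OF pmf_on_pair_pyz]) (simp add: algebra_simps)
  then show ?thesis
    using pc_star_le_exp_plus_prob_sum[of n "cap + x" D] by linarith
qed

lemma pc_star_above_cap_ge:
  "prob_sum pair_pyz cdens n (\<lambda>s. real n * x + (ln 2 + D) < s) - exp (- D) \<le> pc_star PX WY WZ n (cap + x)"
  using prob_sum_minus_exp_le_pc_star[of n "cap + x" D] by (simp add: algebra_simps)

lemma one_minus_pc_star_below_cap_le:
  "1 - pc_star PX WY WZ n (cap - x)
    \<le> exp (- D) + prob_sum pair_pyz (\<lambda>a. - cdens a) n (\<lambda>s. real n * x + - (ln 2 + D) \<le> s)"
  using prob_sum_minus_exp_le_pc_star[of n "cap - x" D]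
    prob_sum_greater_conv_uminus[OF pmf_on_pair_pyz, of cdens n "real n * (cap - x) + ln 2 + D - real n * cap"]
  by (simp add: algebra_simps)

lemma one_minus_pc_star_below_cap_ge:
  "prob_sum pair_pyz (\<lambda>a. - cdens a) n (\<lambda>s. real n * x + D < s) - exp (- D)
    \<le> 1 - pc_star PX WY WZ n (cap - x)"
proof -
  have "prob_sum pair_pyz (\<lambda>a. - cdens a) n (\<lambda>s. real n * x + D < s)
      \<le> prob_sum pair_pyz (\<lambda>a. - cdens a) n (\<lambda>s. real n * x + D \<le> s)"
    by (intro prob_sum_mono[OF pmf_on_pair_pyz]) simp
  then show ?thesis
    using pc_star_le_exp_plus_prob_sum[of n "cap - x" D]
      prob_sum_greater_conv_uminus[OF pmf_on_pair_pyz, of cdens n "real n * (cap - x) - D - real n * cap"]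
    by (simp add: algebra_simps)
qed

end

locale moderate_rates = bio_setting +
  fixes \<xi> :: "nat \<Rightarrow> real"
  assumes disp_pos: "0 < disp" and xi_pos: "\<And>n. 0 < \<xi> n" and xi_tendsto: "\<xi> \<longlonglongrightarrow> 0"
    and sqrt_xi_at_top: "filterlim (\<lambda>n. sqrt (real n) * \<xi> n) at_top sequentially"
begin

sublocale pos: bounded_centered pair_pyz cdens disp "\<Sum>a\<in>UNIV. \<bar>cdens a\<bar>"
  by (rule bounded_centered_cdens[OF disp_pos])

sublocale neg: bounded_centered pair_pyz "\<lambda>a. - cdens a" disp "\<Sum>a\<in>UNIV. \<bar>cdens a\<bar>"
  by (rule bounded_centered_uminus[OF pos.bounded_centered_axioms])

text \<open>The margin \<open>n\<xi>\<^sub>n\<^sup>2/V\<close> between the threshold and \<open>nR\<close>: large enough to make the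
  correction \<open>exp (- margin n)\<close> negligible, small enough not to move the tail probabilities.\<close>

definition margin :: "nat \<Rightarrow> real" where
  "margin n = real n * (\<xi> n)\<^sup>2 / disp"

lemma filterlim_scale: "filterlim (\<lambda>n. real n * (\<xi> n)\<^sup>2) at_top sequentially"
  by (rule filterlim_real_mult_square_at_top[OF sqrt_xi_at_top])

lemma scale_le_margin: "real n * (\<xi> n)\<^sup>2 * (2 * (1 / (2 * disp))) \<le> margin n"
  by (simp add: margin_def)

lemma tendsto_margin_div:
  "(\<lambda>n. margin n / (real n * \<xi> n)) \<longlonglongrightarrow> 0"
  "(\<lambda>n. - margin n / (real n * \<xi> n)) \<longlonglongrightarrow> 0"
  "(\<lambda>n. (ln 2 + margin n) / (real n * \<xi> n)) \<longlonglongrightarrow> 0"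
  "(\<lambda>n. - (ln 2 + margin n) / (real n * \<xi> n)) \<longlonglongrightarrow> 0"
proof -
  note lim = tendsto_offset_div_zero[OF xi_pos xi_tendsto filterlim_scale, of _ disp]
  show "(\<lambda>n. margin n / (real n * \<xi> n)) \<longlonglongrightarrow> 0"
    using lim[of 0] unfolding margin_def by (simp only: add_0_left)
  then show "(\<lambda>n. - margin n / (real n * \<xi> n)) \<longlonglongrightarrow> 0"
    using tendsto_minus by (fastforce simp only: minus_divide_left minus_zero)
  show "(\<lambda>n. (ln 2 + margin n) / (real n * \<xi> n)) \<longlonglongrightarrow> 0"
    using lim[of "ln 2"] unfolding margin_def .
  then show "(\<lambda>n. - (ln 2 + margin n) / (real n * \<xi> n)) \<longlonglongrightarrow> 0"
    using tendsto_minus by (fastforce simp only: minus_divide_left minus_zero)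
qed

lemma tendsto_pc_star_above_cap:
  "(\<lambda>n. - ln (pc_star PX WY WZ n (cap + \<xi> n)) / (real n * (\<xi> n)\<^sup>2)) \<longlonglongrightarrow> 1 / (2 * disp)"
proof (rule tendsto_neg_ln_div_of_tail_bounds[OF _ filterlim_scale scale_le_margin])
  show "0 < 1 / (2 * disp)"
    using disp_pos by simp
  show "pc_star PX WY WZ n (cap + \<xi> n)
    \<le> exp (- margin n) + prob_sum pair_pyz cdens n (\<lambda>s. real n * \<xi> n + - margin n \<le> s)" for n
    by (rule pc_star_above_cap_le)
  show "eventually (\<lambda>n. prob_sum pair_pyz cdens n (\<lambda>s. real n * \<xi> n + - margin n \<le> s)
    \<le> exp (- (real n * (\<xi> n)\<^sup>2) * (1 / (2 * disp) - \<epsilon>))) sequentially" if "0 < \<epsilon>" for \<epsilon>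
    by (rule pos.eventually_prob_sum_ge_le_exp[OF xi_pos xi_tendsto tendsto_margin_div(2) that])
  show "prob_sum pair_pyz cdens n (\<lambda>s. real n * \<xi> n + (ln 2 + margin n) < s) - exp (- margin n)
    \<le> pc_star PX WY WZ n (cap + \<xi> n)" for n
    by (rule pc_star_above_cap_ge)
  show "eventually (\<lambda>n. exp (- (real n * (\<xi> n)\<^sup>2) * (1 / (2 * disp) + \<epsilon>))
    \<le> prob_sum pair_pyz cdens n (\<lambda>s. real n * \<xi> n + (ln 2 + margin n) < s)) sequentially" if "0 < \<epsilon>" for \<epsilon>
    by (rule pos.eventually_exp_le_prob_sum_greater[OF xi_pos xi_tendsto tendsto_margin_div(3) that filterlim_scale])
qed

lemma tendsto_one_minus_pc_star_below_cap:
  "(\<lambda>n. - ln (1 - pc_star PX WY WZ n (cap - \<xi> n)) / (real n * (\<xi> n)\<^sup>2)) \<longlonglongrightarrow> 1 / (2 * disp)"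
proof (rule tendsto_neg_ln_div_of_tail_bounds[OF _ filterlim_scale scale_le_margin])
  show "0 < 1 / (2 * disp)"
    using disp_pos by simp
  show "1 - pc_star PX WY WZ n (cap - \<xi> n)
    \<le> exp (- margin n) + prob_sum pair_pyz (\<lambda>a. - cdens a) n (\<lambda>s. real n * \<xi> n + - (ln 2 + margin n) \<le> s)" for n
    by (rule one_minus_pc_star_below_cap_le)
  show "eventually (\<lambda>n. prob_sum pair_pyz (\<lambda>a. - cdens a) n (\<lambda>s. real n * \<xi> n + - (ln 2 + margin n) \<le> s)
    \<le> exp (- (real n * (\<xi> n)\<^sup>2) * (1 / (2 * disp) - \<epsilon>))) sequentially" if "0 < \<epsilon>" for \<epsilon>
    by (rule neg.eventually_prob_sum_ge_le_exp[OF xi_pos xi_tendsto tendsto_margin_div(4) that])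
  show "prob_sum pair_pyz (\<lambda>a. - cdens a) n (\<lambda>s. real n * \<xi> n + margin n < s) - exp (- margin n)
    \<le> 1 - pc_star PX WY WZ n (cap - \<xi> n)" for n
    by (rule one_minus_pc_star_below_cap_ge)
  show "eventually (\<lambda>n. exp (- (real n * (\<xi> n)\<^sup>2) * (1 / (2 * disp) + \<epsilon>))
    \<le> prob_sum pair_pyz (\<lambda>a. - cdens a) n (\<lambda>s. real n * \<xi> n + margin n < s)) sequentially" if "0 < \<epsilon>" for \<epsilon>
    by (rule neg.eventually_exp_le_prob_sum_greater[OF xi_pos xi_tendsto tendsto_margin_div(1) that filterlim_scale])
qed

end

theorem theorem7:
  fixes PX :: "'x::finite \<Rightarrow> real" and WY :: "'x \<Rightarrow> 'y::finite \<Rightarrow> real"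
    and WZ :: "'x \<Rightarrow> 'z::finite \<Rightarrow> real" and \<xi> :: "nat \<Rightarrow> real"
  assumes "pmf_on PX" and "stoch_chan WY" and "stoch_chan WZ"
    and "V_bio PX WY WZ > 0"
    and "\<And>n. \<xi> n > 0"
    and "\<xi> \<longlonglongrightarrow> 0"
    and "filterlim (\<lambda>n. sqrt (real n) * \<xi> n) at_top sequentially"
  shows "((\<lambda>n. - ln (pc_star PX WY WZ n (C_bio PX WY WZ + \<xi> n)) / (real n * (\<xi> n)\<^sup>2))
           \<longlonglongrightarrow> 1 / (2 * V_bio PX WY WZ)) \<and>
         ((\<lambda>n. - ln (1 - pc_star PX WY WZ n (C_bio PX WY WZ - \<xi> n)) / (real n * (\<xi> n)\<^sup>2))
           \<longlonglongrightarrow> 1 / (2 * V_bio PX WY WZ))"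
proof -
  interpret moderate_rates PX WY WZ \<xi>
    using assms by unfold_locales
  show ?thesis
    using tendsto_pc_star_above_cap tendsto_one_minus_pc_star_below_cap by blast
qed

end
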